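(* Let $2\leq m\leq n\leq p$ be integers. The $m\times n\times p$ chessboard has a bi-sited closed knight tour if and only if all of the following hold: (a) at least one of $m,n,p$ is even; (b) $n\geq 3$; (c) $p\geq 4$.
   Context: The $m\times n\times p$ board is $\mathcal{B}=\{1,\dots,m\}\times\{1,\dots,n\}\times\{1,\dots,p\}$. Knight moves $\mathcal{C}_3$ are vectors in $\mathbb{Z}^3$ with exactly one coordinate in $\{\pm1\}$, exactly one in $\{\pm2\}$ and the remaining one $0$; cells are adjacent iff their difference is in $\mathcal{C}_3$; a closed knight tour is a Hamiltonian cycle. Let $e_1,e_2,e_3$ be the standard basis. For $c\in\mathcal{C}_3$ let $e_{[c,1]}$ (resp. $e_{[c,2]}$) be the basis vector of the coordinate where $c$ has entry $\pm1$ (resp. $\pm2$), and $\tilde c=-\langle c,e_{[c,1]}\rangle e_{[c,1]}+\langle c,e_{[c,2]}\rangle e_{[c,2]}$. For a Hamiltonian cycle $(a^i)_{i\in I}$, $I=\{1,\dots,N\}$, indices mod $N$, a \emph{site} given by edges $\{a^n,a^{n+1}\}$, $\{a^m,a^{m+1}\}$ is one of the following, for some $c\in\mathcal{C}_3$ and some $i$: (wopp) $a^{n+1}=a^n+c$, $a^m=a^{m+1}+c$, $a^m-a^{n+1}=a^{m+1}-a^n\in\{\pm2e_i\}$; (nwopp) $a^{n+1}=a^n+c$, $a^{m+1}=a^m+c$, $a^m-a^n=a^{m+1}-a^{n+1}\in\{\pm2e_i\}$; (wocp) $a^{n+1}=a^n+c$, $a^{m+1}=a^m+\tilde c$, $a^m-a^n=\langle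 c,e_{[c,1]}\rangle e_{[c,1]}$; (nwocp) $a^{n+1}=a^n+c$, $a^m=a^{m+1}+\tilde c$, $a^{m+1}-a^n=\langle c,e_{[c,1]}\rangle e_{[c,1]}$. Its support is $\{a^n,a^{n+1},a^m,a^{m+1}\}$. A closed tour is \emph{bi-sited} if it contains two sites with disjoint supports. *)

theory Defs
  imports Main
begin

text \<open>Cells / vectors of Z^3 as integer triples; coordinates indexed by 0,1,2
  (standing for the paper's coordinates 1,2,3).\<close>

type_synonym pt = "int \<times> int \<times> int"

fun cd :: "pt \<Rightarrow> nat \<Rightarrow> int" where
  "cd (x, y, z) i = (if i = 0 then x else if i = 1 then y else z)"

definition mkpt :: "(nat \<Rightarrow> int) \<Rightarrow> pt" where
  "mkpt f = (f 0, f 1, f 2)"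

definition padd :: "pt \<Rightarrow> pt \<Rightarrow> pt" where
  "padd u v = mkpt (\<lambda>i. cd u i + cd v i)"

definition psub :: "pt \<Rightarrow> pt \<Rightarrow> pt" where
  "psub u v = mkpt (\<lambda>i. cd u i - cd v i)"

definition psmul :: "int \<Rightarrow> pt \<Rightarrow> pt" where
  "psmul k u = mkpt (\<lambda>i. k * cd u i)"

definition ebas :: "nat \<Rightarrow> pt" where
  "ebas i = mkpt (\<lambda>j. if j = i then 1 else 0)"

definition pinner :: "pt \<Rightarrow> pt \<Rightarrow> int" where
  "pinner u v = cd u 0 * cd v 0 + cd u 1 * cd v 1 + cd u 2 * cd v 2"

definition knight_moves :: "pt set" where
  "knight_moves = {c. \<exists>i j k. {i, j, k} = {0, 1, 2} \<and>
       \<bar>cd c i\<bar> = 1 \<and> \<bar>cd c j\<bar> = 2 \<and> cd c k = 0}"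

definition idx1 :: "pt \<Rightarrow> nat" where
  "idx1 c = (THE i. i < 3 \<and> \<bar>cd c i\<bar> = 1)"

definition idx2 :: "pt \<Rightarrow> nat" where
  "idx2 c = (THE i. i < 3 \<and> \<bar>cd c i\<bar> = 2)"

definition ctilde :: "pt \<Rightarrow> pt" where
  "ctilde c = padd (psmul (- pinner c (ebas (idx1 c))) (ebas (idx1 c)))
                   (psmul (pinner c (ebas (idx2 c))) (ebas (idx2 c)))"

definition board :: "nat \<Rightarrow> nat \<Rightarrow> nat \<Rightarrow> pt set" where
  "board m n p = {(x, y, z). 1 \<le> x \<and> x \<le> int m \<and> 1 \<le> y \<and> y \<le> int n \<and> 1 \<le> z \<and> z \<le> int p}"

text \<open>A closed knight tour (Hamiltonian cycle of the knight graph) on B, given as a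
  cyclic enumeration a 0, ..., a (N-1) of B (indices taken mod N), consecutive
  cells differing by a knight move.\<close>
definition closed_tour :: "pt set \<Rightarrow> nat \<Rightarrow> (nat \<Rightarrow> pt) \<Rightarrow> bool" where
  "closed_tour B N a \<longleftrightarrow> finite B \<and> N = card B \<and> 3 \<le> N \<and> bij_betw a {..<N} B \<and>
     (\<forall>i<N. psub (a (Suc i mod N)) (a i) \<in> knight_moves)"

definition is_site :: "nat \<Rightarrow> (nat \<Rightarrow> pt) \<Rightarrow> nat \<Rightarrow> nat \<Rightarrow> bool" where
  "is_site N a n m \<longleftrightarrow> n < N \<and> m < N \<and>
    (let an = a n; an1 = a (Suc n mod N); am = a m; am1 = a (Suc m mod N) in
     \<exists>c \<in> knight_moves. \<exists>i < 3.
       (an1 = padd an c \<and> am = padd am1 c \<and> psub am an1 = psub am1 an \<and>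
          psub am an1 \<in> {psmul 2 (ebas i), psmul (-2) (ebas i)})
     \<or> (an1 = padd an c \<and> am1 = padd am c \<and> psub am an = psub am1 an1 \<and>
          psub am an \<in> {psmul 2 (ebas i), psmul (-2) (ebas i)})
     \<or> (an1 = padd an c \<and> am1 = padd am (ctilde c) \<and>
          psub am an = psmul (pinner c (ebas (idx1 c))) (ebas (idx1 c)))
     \<or> (an1 = padd an c \<and> am = padd am1 (ctilde c) \<and>
          psub am1 an = psmul (pinner c (ebas (idx1 c))) (ebas (idx1 c))))"

definition site_support :: "nat \<Rightarrow> (nat \<Rightarrow> pt) \<Rightarrow> nat \<Rightarrow> nat \<Rightarrow> pt set" where
  "site_support N a n m = {a n, a (Suc n mod N), a m, a (Suc m mod N)}"

definition bi_sited :: "nat \<Rightarrow> (nat \<Rightarrow> pt) \<Rightarrow> bool" where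
  "bi_sited N a \<longleftrightarrow> (\<exists>n m n' m'. is_site N a n m \<and> is_site N a n' m' \<and>
      site_support N a n m \<inter> site_support N a n' m' = {})"

definition has_bisited_tour :: "nat \<Rightarrow> nat \<Rightarrow> nat \<Rightarrow> bool" where
  "has_bisited_tour m n p \<longleftrightarrow> (\<exists>N a. closed_tour (board m n p) N a \<and> bi_sited N a)"

end

theory Submission
  imports Defs
begin

text \<open>Necessity. The knight graph is bipartite by the parity of the coordinate sum, so a closed
  tour has even length and the board an even number of cells. If two sides are at most 2, every
  knight move changes the third coordinate by \<open>\<plusminus>2\<close>, so a tour cannot leave one parity class
  of that coordinate. On the \<open>2 \<times> 3 \<times> 3\<close> board the cell \<open>(1, 2, 2)\<close> has no knight neighbour.

  Sufficiency. Two bi-sited tours of boxes glued along a face are spliced into one by exchanging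
  an edge of each, a connector, for two crossing knight moves; since the two sites of each tour have
  disjoint supports, one of them survives, so the spliced tour is again bi-sited. Keeping track
  of connectors on all faces, every admissible box with sides at most 7 is covered by a
  machine-checked tour or a splice of such, and every larger admissible box is split into
  admissible boxes by cutting off a slab of width 4.\<close>

lemma padd_triple [simp]: "padd (x1, y1, z1) (x2, y2, z2) = (x1 + x2, y1 + y2, z1 + z2)"
  by (simp add: padd_def mkpt_def)

lemma psub_triple [simp]: "psub (x1, y1, z1) (x2, y2, z2) = (x1 - x2, y1 - y2, z1 - z2)"
  by (simp add: psub_def mkpt_def)

lemma psmul_triple [simp]: "psmul k (x, y, z) = (k * x, k * y, k * z)"
  by (simp add: psmul_def mkpt_def)

lemma ebas_simps [simp]: "ebas 0 = (1, 0, 0)" "ebas (Suc 0) = (0, 1, 0)" "ebas 2 = (0, 0, 1)"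
  by (simp_all add: ebas_def mkpt_def)

definition is_knight_move :: "pt \<Rightarrow> bool" where
  "is_knight_move v = (case v of (x, y, z) \<Rightarrow>
     (\<bar>x\<bar> = 1 \<and> \<bar>y\<bar> = 2 \<and> z = 0) \<or> (\<bar>x\<bar> = 1 \<and> y = 0 \<and> \<bar>z\<bar> = 2) \<or> (x = 0 \<and> \<bar>y\<bar> = 1 \<and> \<bar>z\<bar> = 2) \<or>
     (\<bar>x\<bar> = 2 \<and> \<bar>y\<bar> = 1 \<and> z = 0) \<or> (\<bar>x\<bar> = 2 \<and> y = 0 \<and> \<bar>z\<bar> = 1) \<or> (x = 0 \<and> \<bar>y\<bar> = 2 \<and> \<bar>z\<bar> = 1))"

lemma knight_moves_iff: "v \<in> knight_moves \<longleftrightarrow> is_knight_move v"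
proof (cases v)
  case (fields x y z)
  show ?thesis
  proof
    assume "v \<in> knight_moves"
    then obtain i j k where ijk: "{i, j, k} = {0::nat, 1, 2}"
        "\<bar>cd v i\<bar> = 1" "\<bar>cd v j\<bar> = 2" "cd v k = 0"
      unfolding knight_moves_def by blast
    have "i \<in> {0, 1, 2}" "j \<in> {0, 1, 2}" "k \<in> {0, 1, 2}" using ijk(1) by blast+
    then show "is_knight_move v"
      using ijk(2-4) unfolding is_knight_move_def fields by (auto split: if_splits)
  next
    assume "is_knight_move v"
    then show "v \<in> knight_moves"
      unfolding is_knight_move_def fields knight_moves_def mem_Collect_eq prod.case
      apply (elim disjE conjE)
           apply (rule exI[of _ 0], rule exI[of _ 1], rule exI[of _ 2], force)
          apply (rule exI[of _ 0], rule exI[of _ 2], rule exI[of _ 1], force)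
         apply (rule exI[of _ 1], rule exI[of _ 2], rule exI[of _ 0], force)
        apply (rule exI[of _ 1], rule exI[of _ 0], rule exI[of _ 2], force)
       apply (rule exI[of _ 2], rule exI[of _ 0], rule exI[of _ 1], force)
      apply (rule exI[of _ 2], rule exI[of _ 1], rule exI[of _ 0], force)
      done
  qed
qed

definition knight_edge :: "pt \<times> pt \<Rightarrow> bool" where
  "knight_edge e \<longleftrightarrow> is_knight_move (psub (snd e) (fst e))"

section \<open>Cyclic lists\<close>

definition cycle_edges :: "'a list \<Rightarrow> ('a \<times> 'a) set" where
  "cycle_edges xs = set (zip xs (rotate1 xs))"

definition path_edges :: "'a list \<Rightarrow> ('a \<times> 'a) set" where
  "path_edges xs = set (zip (butlast xs) (tl xs))"

lemma cycle_edges_nth: "cycle_edges xs = {(xs ! i, xs ! (Suc i mod length xs)) | i. i < length xs}"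
  unfolding cycle_edges_def set_zip by (auto simp: nth_rotate1)

lemma cycle_edges_subset: "(p, q) \<in> cycle_edges xs \<Longrightarrow> p \<in> set xs \<and> q \<in> set xs"
  unfolding cycle_edges_def by (auto dest: set_zip_leftD set_zip_rightD)

lemma cycle_edges_map: "cycle_edges (map f xs) = map_prod f f ` cycle_edges xs"
  unfolding cycle_edges_def rotate1_map zip_map_map by (simp add: map_prod_def)

lemma zip_tl_snoc:
  "xs \<noteq> [] \<Longrightarrow> zip xs (tl xs @ [z]) = zip (butlast xs) (tl xs) @ [(last xs, z)]"
  by (induction xs) (auto simp: neq_Nil_conv)

lemma cycle_edges_conv_path_edges:
  "xs \<noteq> [] \<Longrightarrow> cycle_edges xs = path_edges xs \<union> {(last xs, hd xs)}"
  unfolding cycle_edges_def path_edges_def by (simp add: rotate1_hd_tl zip_tl_snoc)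

lemma cycle_edges_append:
  assumes "xs \<noteq> []" "ys \<noteq> []"
  shows "cycle_edges (xs @ ys) = path_edges xs \<union> path_edges ys \<union> {(last xs, hd ys), (last ys, hd xs)}"
proof -
  have "rotate1 (xs @ ys) = (tl xs @ [hd ys]) @ (tl ys @ [hd xs])"
    using assms by (simp add: rotate1_hd_tl)
  then have "zip (xs @ ys) (rotate1 (xs @ ys)) = zip xs (tl xs @ [hd ys]) @ zip ys (tl ys @ [hd xs])"
    by (metis zip_append assms length_tl length_append_singleton Suc_pred' length_greater_0_conv)
  then show ?thesis
    unfolding cycle_edges_def path_edges_def using assms by (auto simp: zip_tl_snoc)
qed

lemma cycle_edges_rotate1: "cycle_edges (rotate1 xs) = cycle_edges xs"
proof (cases "length xs \<le> 1")
  case True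
  then show ?thesis by (cases xs) auto
next
  case False
  then obtain x ys where xs: "xs = x # ys" and "ys \<noteq> []" by (cases xs) auto
  then show ?thesis
    using cycle_edges_append[of ys "[x]"] cycle_edges_append[of "[x]" ys] by auto
qed

lemma cycle_edges_rotate: "cycle_edges (rotate k xs) = cycle_edges xs"
  by (induction k) (simp_all add: cycle_edges_rotate1)

lemma rotate_to_edge:
  assumes "(p, q) \<in> cycle_edges xs"
  obtains k where "rotate k xs \<noteq> []" "last (rotate k xs) = p" "hd (rotate k xs) = q"
proof -
  from assms obtain i where i: "i < length xs" "p = xs ! i" "q = xs ! (Suc i mod length xs)"
    unfolding cycle_edges_nth by blast
  let ?N = "length xs" and ?r = "rotate (Suc i) xs"
  have ne: "?r \<noteq> []" using i by auto
  have "hd ?r = ?r ! 0" using ne by (simp add: hd_conv_nth)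
  also have "\<dots> = xs ! ((Suc i + 0) mod ?N)" by (rule nth_rotate) (use i in auto)
  finally have h: "hd ?r = q" using i by simp
  have "Suc i + (?N - 1) = i + ?N" using i by simp
  then have "last ?r = xs ! i"
    using ne nth_rotate[of "?N - 1" xs "Suc i"] i by (simp add: last_conv_nth)
  then show ?thesis using that[OF ne _ h] i by simp
qed

lemma cycle_join:
  assumes "distinct xs" "distinct ys" "set xs \<inter> set ys = {}"
    and "(a, a') \<in> cycle_edges xs" "(b, b') \<in> cycle_edges ys"
    and "\<forall>e\<in>cycle_edges xs. R e" "\<forall>e\<in>cycle_edges ys. R e" "R (a, b')" "R (b, a')"
  obtains zs where "distinct zs" "set zs = set xs \<union> set ys" "length zs = length xs + length ys"
    "\<forall>e\<in>cycle_edges zs. R e"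
    "cycle_edges xs - {(a, a')} \<subseteq> cycle_edges zs" "cycle_edges ys - {(b, b')} \<subseteq> cycle_edges zs"
proof -
  obtain k where k: "rotate k xs \<noteq> []" "last (rotate k xs) = a" "hd (rotate k xs) = a'"
    using rotate_to_edge[OF assms(4)] .
  obtain l where l: "rotate l ys \<noteq> []" "last (rotate l ys) = b" "hd (rotate l ys) = b'"
    using rotate_to_edge[OF assms(5)] .
  let ?X = "rotate k xs" and ?Y = "rotate l ys"
  have X: "cycle_edges xs = path_edges ?X \<union> {(a, a')}"
    using cycle_edges_conv_path_edges[OF k(1)] k cycle_edges_rotate by metis
  have Y: "cycle_edges ys = path_edges ?Y \<union> {(b, b')}"
    using cycle_edges_conv_path_edges[OF l(1)] l cycle_edges_rotate by metis
  have XY: "cycle_edges (?X @ ?Y) = path_edges ?X \<union> path_edges ?Y \<union> {(a, b'), (b, a')}"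
    using cycle_edges_append[OF k(1) l(1)] k l by simp
  show ?thesis
    by (rule that[of "?X @ ?Y"]) (use assms X Y XY in auto)
qed

section \<open>Bi-sited cycles\<close>

definition is_site_pair :: "pt \<times> pt \<Rightarrow> pt \<times> pt \<Rightarrow> bool" where
  "is_site_pair e f \<longleftrightarrow>
    (let an = fst e; an1 = snd e; am = fst f; am1 = snd f in
     \<exists>c \<in> knight_moves. \<exists>i < 3.
       (an1 = padd an c \<and> am = padd am1 c \<and> psub am an1 = psub am1 an \<and>
          psub am an1 \<in> {psmul 2 (ebas i), psmul (-2) (ebas i)})
     \<or> (an1 = padd an c \<and> am1 = padd am c \<and> psub am an = psub am1 an1 \<and>
          psub am an \<in> {psmul 2 (ebas i), psmul (-2) (ebas i)})
     \<or> (an1 = padd an c \<and> am1 = padd am (ctilde c) \<and>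
          psub am an = psmul (pinner c (ebas (idx1 c))) (ebas (idx1 c)))
     \<or> (an1 = padd an c \<and> am = padd am1 (ctilde c) \<and>
          psub am1 an = psmul (pinner c (ebas (idx1 c))) (ebas (idx1 c))))"

lemma is_site_iff:
  "is_site N a n m \<longleftrightarrow> n < N \<and> m < N \<and> is_site_pair (a n, a (Suc n mod N)) (a m, a (Suc m mod N))"
  by (simp add: is_site_def is_site_pair_def Let_def)

definition pair_support :: "pt \<times> pt \<Rightarrow> pt \<times> pt \<Rightarrow> pt set" where
  "pair_support e f = {fst e, snd e, fst f, snd f}"

definition has_disjoint_sites :: "pt list \<Rightarrow> bool" where
  "has_disjoint_sites xs \<longleftrightarrow> (\<exists>e1 f1 e2 f2. {e1, f1, e2, f2} \<subseteq> cycle_edges xs \<and>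
     is_site_pair e1 f1 \<and> is_site_pair e2 f2 \<and> pair_support e1 f1 \<inter> pair_support e2 f2 = {})"

definition bisited_cycle :: "pt set \<Rightarrow> pt list \<Rightarrow> bool" where
  "bisited_cycle B xs \<longleftrightarrow> distinct xs \<and> set xs = B \<and> 3 \<le> length xs \<and>
     (\<forall>e\<in>cycle_edges xs. knight_edge e) \<and> has_disjoint_sites xs"

lemma bisited_cycle_closed_tour:
  assumes "bisited_cycle B xs"
  shows "closed_tour B (length xs) ((!) xs)" "bi_sited (length xs) ((!) xs)"
proof -
  let ?N = "length xs"
  have edge: "(xs ! i, xs ! (Suc i mod ?N)) \<in> cycle_edges xs" if "i < ?N" for i
    using that unfolding cycle_edges_nth by blast
  have index: "\<exists>i<?N. e = (xs ! i, xs ! (Suc i mod ?N))" if "e \<in> cycle_edges xs" for e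
    using that unfolding cycle_edges_nth by blast
  have xs: "distinct xs" "set xs = B" "3 \<le> ?N" "\<forall>e\<in>cycle_edges xs. knight_edge e"
    using assms unfolding bisited_cycle_def by blast+
  show "closed_tour B ?N ((!) xs)"
    unfolding closed_tour_def
  proof (intro conjI allI impI)
    show "finite B" "?N = card B" "3 \<le> ?N" "bij_betw ((!) xs) {..<?N} B"
      using xs bij_betw_nth[OF xs(1)] distinct_card[OF xs(1)] by auto
    fix i assume "i < ?N"
    then show "psub (xs ! (Suc i mod ?N)) (xs ! i) \<in> knight_moves"
      using edge xs(4) by (force simp: knight_moves_iff knight_edge_def)
  qed
  obtain e1 f1 e2 f2 where sites: "{e1, f1, e2, f2} \<subseteq> cycle_edges xs"
      "is_site_pair e1 f1" "is_site_pair e2 f2" "pair_support e1 f1 \<inter> pair_support e2 f2 = {}"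
    using assms unfolding bisited_cycle_def has_disjoint_sites_def by blast
  obtain n1 m1 n2 m2 where "n1 < ?N" "e1 = (xs ! n1, xs ! (Suc n1 mod ?N))"
      "m1 < ?N" "f1 = (xs ! m1, xs ! (Suc m1 mod ?N))"
      "n2 < ?N" "e2 = (xs ! n2, xs ! (Suc n2 mod ?N))"
      "m2 < ?N" "f2 = (xs ! m2, xs ! (Suc m2 mod ?N))"
    using index sites(1) by (metis insert_subset)
  then show "bi_sited ?N ((!) xs)"
    unfolding bi_sited_def using sites
    by (intro exI[of _ n1] exI[of _ m1] exI[of _ n2] exI[of _ m2])
      (simp add: is_site_iff site_support_def pair_support_def)
qed

lemma has_bisited_tour_if_bisited_cycle:
  "bisited_cycle (board m n p) xs \<Longrightarrow> has_bisited_tour m n p"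
  unfolding has_bisited_tour_def using bisited_cycle_closed_tour by blast

lemma psub_padd_padd [simp]: "psub (padd v q) (padd v p) = psub q p"
  by (cases v; cases p; cases q) simp

lemma padd_padd_eq_iff: "padd v q = padd (padd v p) c \<longleftrightarrow> q = padd p c"
  by (cases v; cases p; cases q; cases c) auto

lemma inj_padd: "inj (padd v)"
  by (rule injI) (metis padd_padd_eq_iff padd_triple add_0_right prod_cases3)

lemma is_site_pair_padd:
  "is_site_pair (map_prod (padd v) (padd v) e) (map_prod (padd v) (padd v) f) = is_site_pair e f"
proof -
  have "is_site_pair (padd v p, padd v q) (padd v r, padd v s) = is_site_pair (p, q) (r, s)"
    for p q r s
    unfolding is_site_pair_def Let_def fst_conv snd_conv padd_padd_eq_iff psub_padd_padd ..
  then show ?thesis by (cases e; cases f) simp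
qed

lemma pair_support_padd:
  "pair_support (map_prod (padd v) (padd v) e) (map_prod (padd v) (padd v) f) = padd v ` pair_support e f"
  by (cases e; cases f) (simp add: pair_support_def)

lemma knight_edge_padd: "knight_edge (map_prod (padd v) (padd v) e) = knight_edge e"
  by (cases e) (simp add: knight_edge_def)

lemma bisited_cycle_padd:
  assumes "bisited_cycle B ys"
  shows "bisited_cycle (padd v ` B) (map (padd v) ys)"
proof -
  let ?g = "map_prod (padd v) (padd v)"
  obtain e1 f1 e2 f2 where sites: "{e1, f1, e2, f2} \<subseteq> cycle_edges ys"
      "is_site_pair e1 f1" "is_site_pair e2 f2" "pair_support e1 f1 \<inter> pair_support e2 f2 = {}"
    using assms unfolding bisited_cycle_def has_disjoint_sites_def by blast
  have "pair_support (?g e1) (?g f1) \<inter> pair_support (?g e2) (?g f2) = {}"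
    using sites(4) inj_padd by (simp add: pair_support_padd flip: image_Int)
  moreover have "{?g e1, ?g f1, ?g e2, ?g f2} \<subseteq> cycle_edges (map (padd v) ys)"
    using sites(1) by (simp add: cycle_edges_map)
  ultimately have "has_disjoint_sites (map (padd v) ys)"
    unfolding has_disjoint_sites_def using sites(2,3) is_site_pair_padd by metis
  moreover have "distinct (map (padd v) ys)"
    using assms inj_padd by (simp add: bisited_cycle_def distinct_map inj_on_subset[OF inj_padd])
  moreover have "\<forall>e\<in>cycle_edges (map (padd v) ys). knight_edge e"
    using assms by (simp add: bisited_cycle_def cycle_edges_map knight_edge_padd)
  ultimately show ?thesis
    using assms by (simp add: bisited_cycle_def)
qed

lemma site_avoiding_edge:
  assumes "has_disjoint_sites xs"
  obtains e f where "e \<in> cycle_edges xs - {d}" "f \<in> cycle_edges xs - {d}" "is_site_pair e f"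
    "pair_support e f \<subseteq> set xs"
proof -
  obtain e1 f1 e2 f2 where sites: "{e1, f1, e2, f2} \<subseteq> cycle_edges xs"
      "is_site_pair e1 f1" "is_site_pair e2 f2" "pair_support e1 f1 \<inter> pair_support e2 f2 = {}"
    using assms unfolding has_disjoint_sites_def by blast
  have support: "pair_support e f \<subseteq> set xs" if "e \<in> cycle_edges xs" "f \<in> cycle_edges xs" for e f
    using that cycle_edges_subset[of "fst e" "snd e"] cycle_edges_subset[of "fst f" "snd f"]
    unfolding pair_support_def by simp
  show ?thesis
  proof (cases "d = e1 \<or> d = f1")
    case True
    then have "d \<noteq> e2 \<and> d \<noteq> f2" using sites(4) unfolding pair_support_def by auto
    then show ?thesis using that[of e2 f2] sites(1,3) support by auto
  next
    case False
    then show ?thesis using that[of e1 f1] sites(1,2) support by auto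
  qed
qed

lemma bisited_cycle_join:
  assumes xs: "bisited_cycle A xs" and ys: "bisited_cycle B ys" and "A \<inter> B = {}"
    and "(a, a') \<in> cycle_edges xs" "(b, b') \<in> cycle_edges ys"
    and "knight_edge (a, b')" "knight_edge (b, a')"
  obtains zs where "bisited_cycle (A \<union> B) zs"
    "cycle_edges xs - {(a, a')} \<subseteq> cycle_edges zs" "cycle_edges ys - {(b, b')} \<subseteq> cycle_edges zs"
proof -
  have X: "distinct xs" "set xs = A" "3 \<le> length xs" "\<forall>e\<in>cycle_edges xs. knight_edge e"
      "has_disjoint_sites xs"
    using xs unfolding bisited_cycle_def by blast+
  have Y: "distinct ys" "set ys = B" "\<forall>e\<in>cycle_edges ys. knight_edge e" "has_disjoint_sites ys"
    using ys unfolding bisited_cycle_def by blast+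
  obtain zs where zs: "distinct zs" "set zs = set xs \<union> set ys" "length zs = length xs + length ys"
      "\<forall>e\<in>cycle_edges zs. knight_edge e"
      "cycle_edges xs - {(a, a')} \<subseteq> cycle_edges zs" "cycle_edges ys - {(b, b')} \<subseteq> cycle_edges zs"
    by (rule cycle_join[OF X(1) Y(1) _ assms(4,5) X(4) Y(3) assms(6,7)])
      (use X(2) Y(2) assms(3) in simp_all)
  obtain e1 f1 where 1: "e1 \<in> cycle_edges xs - {(a, a')}" "f1 \<in> cycle_edges xs - {(a, a')}"
      "is_site_pair e1 f1" "pair_support e1 f1 \<subseteq> A"
    using site_avoiding_edge[OF X(5)] X(2) by blast
  obtain e2 f2 where 2: "e2 \<in> cycle_edges ys - {(b, b')}" "f2 \<in> cycle_edges ys - {(b, b')}"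
      "is_site_pair e2 f2" "pair_support e2 f2 \<subseteq> B"
    using site_avoiding_edge[OF Y(4)] Y(2) by blast
  have "pair_support e1 f1 \<inter> pair_support e2 f2 = {}"
    using 1(4) 2(4) assms(3) by blast
  moreover have "{e1, f1, e2, f2} \<subseteq> cycle_edges zs"
    using 1(1,2) 2(1,2) zs(5,6) by blast
  ultimately have "has_disjoint_sites zs"
    unfolding has_disjoint_sites_def using 1(3) 2(3) by blast
  moreover have "3 \<le> length zs" using zs(3) X(3) by simp
  ultimately have "bisited_cycle (A \<union> B) zs"
    using zs(1,2,4) X(2) Y(2) unfolding bisited_cycle_def by simp
  then show ?thesis using that zs(5,6) by blast
qed

section \<open>Boxes and connectors\<close>

lemma board_eq: "board a b c = {1..int a} \<times> {1..int b} \<times> {1..int c}"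
  unfolding board_def by auto

lemma card_board: "card (board a b c) = a * b * c"
  unfolding board_eq by (simp add: card_cartesian_product)

lemma padd_image_box:
  "padd (u, v, w) ` (X \<times> Y \<times> Z) = ((+) u ` X) \<times> ((+) v ` Y) \<times> ((+) w ` Z)"
  by (force simp: image_iff)

lemma interval_union: "{1..int a1} \<union> (+) (int a1) ` {1..int a2} = {1..int (a1 + a2)}"
  by auto

lemma board_union_x: "board a1 b c \<union> padd (int a1, 0, 0) ` board a2 b c = board (a1 + a2) b c"
  unfolding board_eq padd_image_box interval_union[symmetric] by auto

lemma board_union_y: "board a b1 c \<union> padd (0, int b1, 0) ` board a b2 c = board a (b1 + b2) c"
  unfolding board_eq padd_image_box interval_union[symmetric] by auto

lemma board_union_z: "board a b c1 \<union> padd (0, 0, int c1) ` board a b c2 = board a b (c1 + c2)"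
  unfolding board_eq padd_image_box interval_union[symmetric] by auto

lemma board_disjoint_x: "board a1 b c \<inter> padd (int a1, 0, 0) ` board a2 b c = {}"
  unfolding board_def by auto

lemma board_disjoint_y: "board a b1 c \<inter> padd (0, int b1, 0) ` board a b2 c = {}"
  unfolding board_def by auto

lemma board_disjoint_z: "board a b c1 \<inter> padd (0, 0, int c1) ` board a b c2 = {}"
  unfolding board_def by auto

datatype axis = X | Y | Z

text \<open>Connectors are fixed edges near the two faces of a box orthogonal to an axis, chosen so that
  when two boxes are glued along that axis, the far connector of the first and the translated near
  connector of the second can be exchanged for two crossing knight moves.\<close>

definition near_connector :: "axis \<Rightarrow> nat \<Rightarrow> nat \<Rightarrow> nat \<Rightarrow> pt \<times> pt" where
  "near_connector i a b c = (case i of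
      X \<Rightarrow> if 3 \<le> c then ((2, 1, 3), (1, 1, 1)) else ((1, 1, 1), (1, 3, 2))
    | Y \<Rightarrow> if 3 \<le> c then ((2, 1, 3), (1, 1, 1)) else ((3, 2, 1), (1, 1, 1))
    | Z \<Rightarrow> if 3 \<le> b then ((1, 1, 1), (1, 3, 2)) else ((1, 2, 2), (3, 2, 1)))"

definition far_connector :: "axis \<Rightarrow> nat \<Rightarrow> nat \<Rightarrow> nat \<Rightarrow> pt \<times> pt" where
  "far_connector i a b c = (case i of
      X \<Rightarrow> if 3 \<le> c then ((int a - 1, 2, 1), (int a, 2, 3)) else ((int a, 1, 2), (int a, 3, 1))
    | Y \<Rightarrow> if 3 \<le> c then ((1, int b, 3), (2, int b, 1)) else ((1, int b - 1, 2), (3, int b, 2))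
    | Z \<Rightarrow> if 3 \<le> b then ((2, 3, int c), (2, 1, int c - 1)) else ((3, 1, int c - 1), (1, 1, int c)))"

definition connectors :: "axis \<Rightarrow> nat \<Rightarrow> nat \<Rightarrow> nat \<Rightarrow> (pt \<times> pt) set" where
  "connectors i a b c = {near_connector i a b c, far_connector i a b c}"

definition extendable_tour :: "nat \<Rightarrow> nat \<Rightarrow> nat \<Rightarrow> axis set \<Rightarrow> pt list \<Rightarrow> bool" where
  "extendable_tour a b c S xs \<longleftrightarrow>
     bisited_cycle (board a b c) xs \<and> (\<forall>i\<in>S. connectors i a b c \<subseteq> cycle_edges xs)"

definition extendable :: "nat \<Rightarrow> nat \<Rightarrow> nat \<Rightarrow> axis set \<Rightarrow> bool" where
  "extendable a b c S \<longleftrightarrow> (\<exists>xs. extendable_tour a b c S xs)"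

lemma extendable_mono: "extendable a b c S \<Longrightarrow> T \<subseteq> S \<Longrightarrow> extendable a b c T"
  unfolding extendable_def extendable_tour_def by blast

lemma has_bisited_tour_if_extendable: "extendable a b c S \<Longrightarrow> has_bisited_tour a b c"
  unfolding extendable_def extendable_tour_def using has_bisited_tour_if_bisited_cycle by blast

lemma extendable_join_edges:
  assumes xs: "extendable_tour a1 b1 c1 S xs" and ys: "extendable_tour a2 b2 c2 T ys"
    and union: "board a1 b1 c1 \<union> padd v ` board a2 b2 c2 = board a b c"
    and disjoint: "board a1 b1 c1 \<inter> padd v ` board a2 b2 c2 = {}"
    and e: "e \<in> cycle_edges xs" and f: "f \<in> cycle_edges ys"
    and cross: "knight_edge (fst e, padd v (snd f))" "knight_edge (padd v (fst f), snd e)"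
    and kept: "\<forall>i\<in>S. connectors i a b c \<subseteq>
      cycle_edges xs - {e} \<union> map_prod (padd v) (padd v) ` (cycle_edges ys - {f})"
  shows "extendable a b c S"
proof -
  let ?g = "map_prod (padd v) (padd v)"
  have xs': "bisited_cycle (board a1 b1 c1) xs"
    using xs unfolding extendable_tour_def by blast
  have ys': "bisited_cycle (padd v ` board a2 b2 c2) (map (padd v) ys)"
    using ys bisited_cycle_padd unfolding extendable_tour_def by blast
  have e': "(fst e, snd e) \<in> cycle_edges xs" using e by simp
  have f': "(padd v (fst f), padd v (snd f)) \<in> cycle_edges (map (padd v) ys)"
    using f by (force simp: cycle_edges_map)
  obtain zs where zs: "bisited_cycle (board a1 b1 c1 \<union> padd v ` board a2 b2 c2) zs"
      "cycle_edges xs - {(fst e, snd e)} \<subseteq> cycle_edges zs"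
      "cycle_edges (map (padd v) ys) - {(padd v (fst f), padd v (snd f))} \<subseteq> cycle_edges zs"
    by (rule bisited_cycle_join[OF xs' ys' disjoint e' f' cross])
  have "inj ?g" using inj_padd by (simp add: prod.inj_map)
  then have "?g ` (cycle_edges ys - {f}) = cycle_edges (map (padd v) ys) - {?g f}"
    by (simp add: image_set_diff cycle_edges_map)
  also have "?g f = (padd v (fst f), padd v (snd f))" by (cases f) simp
  finally have "cycle_edges xs - {e} \<union> ?g ` (cycle_edges ys - {f}) \<subseteq> cycle_edges zs"
    using zs(2,3) by simp
  then have "\<forall>i\<in>S. connectors i a b c \<subseteq> cycle_edges zs"
    using kept by (meson order_trans)
  then have "extendable_tour a b c S zs"
    using zs(1) union unfolding extendable_tour_def by simp
  then show ?thesis unfolding extendable_def by blast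
qed

lemma extendable_join:
  assumes xs: "extendable_tour a1 b1 c1 S xs" and ys: "extendable_tour a2 b2 c2 T ys"
    and union: "board a1 b1 c1 \<union> padd v ` board a2 b2 c2 = board a b c"
    and disjoint: "board a1 b1 c1 \<inter> padd v ` board a2 b2 c2 = {}"
    and "j \<in> S" "j \<in> T"
    and cross: "knight_edge (fst (far_connector j a1 b1 c1), padd v (snd (near_connector j a2 b2 c2)))"
      "knight_edge (padd v (fst (near_connector j a2 b2 c2)), snd (far_connector j a1 b1 c1))"
    and near: "near_connector j a b c = near_connector j a1 b1 c1"
      "near_connector j a1 b1 c1 \<noteq> far_connector j a1 b1 c1"
    and far: "far_connector j a b c = map_prod (padd v) (padd v) (far_connector j a2 b2 c2)"
      "far_connector j a2 b2 c2 \<noteq> near_connector j a2 b2 c2"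
    and others: "\<forall>i\<in>S - {j}. connectors i a b c = connectors i a1 b1 c1 \<and>
      far_connector j a1 b1 c1 \<notin> connectors i a1 b1 c1"
  shows "extendable a b c S"
proof (rule extendable_join_edges[OF xs ys union disjoint _ _ cross])
  have X: "\<forall>i\<in>S. connectors i a1 b1 c1 \<subseteq> cycle_edges xs"
    using xs unfolding extendable_tour_def by blast
  have Y: "connectors j a2 b2 c2 \<subseteq> cycle_edges ys"
    using ys \<open>j \<in> T\<close> unfolding extendable_tour_def by blast
  show "far_connector j a1 b1 c1 \<in> cycle_edges xs" "near_connector j a2 b2 c2 \<in> cycle_edges ys"
    using X Y \<open>j \<in> S\<close> unfolding connectors_def by blast+
  show "\<forall>i\<in>S. connectors i a b c \<subseteq> cycle_edges xs - {far_connector j a1 b1 c1} \<union>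
      map_prod (padd v) (padd v) ` (cycle_edges ys - {near_connector j a2 b2 c2})"
  proof
    fix i assume "i \<in> S"
    show "connectors i a b c \<subseteq> cycle_edges xs - {far_connector j a1 b1 c1} \<union>
      map_prod (padd v) (padd v) ` (cycle_edges ys - {near_connector j a2 b2 c2})"
    proof (cases "i = j")
      case True
      then show ?thesis using X Y near far \<open>j \<in> S\<close> unfolding connectors_def by auto
    next
      case False
      then show ?thesis using X others \<open>i \<in> S\<close> by blast
    qed
  qed
qed

lemmas connector_defs = connectors_def near_connector_def far_connector_def

lemma extendable_join_x:
  assumes "extendable a1 b c S" "extendable a2 b c T" "X \<in> S" "X \<in> T"
  shows "extendable (a1 + a2) b c S"
proof -
  obtain xs ys where "extendable_tour a1 b c S xs" "extendable_tour a2 b c T ys"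
    using assms(1,2) unfolding extendable_def by blast
  then show ?thesis
    by (rule extendable_join[OF _ _ board_union_x board_disjoint_x assms(3,4)])
      (auto simp: connector_defs knight_edge_def is_knight_move_def split: axis.splits)
qed

lemma extendable_join_y:
  assumes "extendable a b1 c S" "extendable a b2 c T" "Y \<in> S" "Y \<in> T" "3 \<le> b1"
  shows "extendable a (b1 + b2) c S"
proof -
  obtain xs ys where "extendable_tour a b1 c S xs" "extendable_tour a b2 c T ys"
    using assms(1,2) unfolding extendable_def by blast
  then show ?thesis
    by (rule extendable_join[OF _ _ board_union_y board_disjoint_y assms(3,4)])
      (use assms(5) in \<open>auto simp: connector_defs knight_edge_def is_knight_move_def split: axis.splits\<close>)
qed

lemma extendable_join_z:
  assumes "extendable a b c1 S" "extendable a b c2 T" "Z \<in> S" "Z \<in> T" "3 \<le> c1"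
  shows "extendable a b (c1 + c2) S"
proof -
  obtain xs ys where "extendable_tour a b c1 S xs" "extendable_tour a b c2 T ys"
    using assms(1,2) unfolding extendable_def by blast
  then show ?thesis
    by (rule extendable_join[OF _ _ board_union_z board_disjoint_z assms(3,4)])
      (use assms(5) in \<open>auto simp: connector_defs knight_edge_def is_knight_move_def split: axis.splits\<close>)
qed

section \<open>Certificates\<close>

definition double_steps :: "pt set" where
  "double_steps = {(2, 0, 0), (-2, 0, 0), (0, 2, 0), (0, -2, 0), (0, 0, 2), (0, 0, -2)}"

text \<open>The sites of types (wopp) and (nwopp), in executable form.\<close>

definition simple_site :: "pt \<times> pt \<Rightarrow> pt \<times> pt \<Rightarrow> bool" where
  "simple_site e f \<longleftrightarrow> (let c = psub (snd e) (fst e) in is_knight_move c \<and>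
     ((fst f = padd (snd f) c \<and> psub (fst f) (snd e) \<in> double_steps) \<or>
      (snd f = padd (fst f) c \<and> psub (fst f) (fst e) \<in> double_steps)))"

lemma double_steps_axis:
  assumes "v \<in> double_steps"
  shows "\<exists>i<3. v \<in> {psmul 2 (ebas i), psmul (-2) (ebas i)}"
proof -
  have "v \<in> {psmul 2 (ebas 0), psmul (-2) (ebas 0)} \<or> v \<in> {psmul 2 (ebas 1), psmul (-2) (ebas 1)} \<or>
      v \<in> {psmul 2 (ebas 2), psmul (-2) (ebas 2)}"
    using assms by (auto simp: double_steps_def)
  moreover have "(0::nat) < 3" "(1::nat) < 3" "(2::nat) < 3" by simp_all
  ultimately show ?thesis by blast
qed

lemma is_site_pair_if_simple_site:
  assumes "simple_site e f"
  shows "is_site_pair e f"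
proof -
  obtain p q r s where ef: "e = (p, q)" "f = (r, s)" by (cases e, cases f)
  define c where "c = psub q p"
  have c: "c \<in> knight_moves" "q = padd p c"
    using assms unfolding simple_site_def ef c_def knight_moves_iff
    by (simp_all add: Let_def) (cases p; cases q; simp)
  have "(r = padd s c \<and> psub r q \<in> double_steps) \<or> (s = padd r c \<and> psub r p \<in> double_steps)"
    using assms unfolding simple_site_def ef c_def by (simp add: Let_def)
  then show ?thesis
  proof
    assume h: "r = padd s c \<and> psub r q \<in> double_steps"
    then obtain i where "i < 3" "psub r q \<in> {psmul 2 (ebas i), psmul (-2) (ebas i)}"
      using double_steps_axis by blast
    moreover have "psub r q = psub s p" using h c(2) by (cases p; cases s; cases c) simp
    ultimately show ?thesis
      unfolding is_site_pair_def Let_def ef fst_conv snd_conv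
      by (intro bexI[OF _ c(1)] exI[of _ i]) (use c(2) h in blast)
  next
    assume h: "s = padd r c \<and> psub r p \<in> double_steps"
    then obtain i where "i < 3" "psub r p \<in> {psmul 2 (ebas i), psmul (-2) (ebas i)}"
      using double_steps_axis by blast
    moreover have "psub r p = psub s q" using h c(2) by (cases p; cases r; cases c) simp
    ultimately show ?thesis
      unfolding is_site_pair_def Let_def ef fst_conv snd_conv
      by (intro bexI[OF _ c(1)] exI[of _ i]) (use c(2) h in blast)
  qed
qed

text \<open>Membership in \<open>board\<close> is spelled out, as the set itself is not executable.\<close>

definition certificate ::
    "nat \<Rightarrow> nat \<Rightarrow> nat \<Rightarrow> axis set \<Rightarrow> pt list \<Rightarrow> pt \<times> pt \<Rightarrow> pt \<times> pt \<Rightarrow> pt \<times> pt \<Rightarrow> pt \<times> pt \<Rightarrow> bool"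
  where
  "certificate a b c S xs e1 f1 e2 f2 \<longleftrightarrow>
     length xs = a * b * c \<and> 3 \<le> length xs \<and> distinct xs \<and>
     (\<forall>(x, y, z)\<in>set xs. 1 \<le> x \<and> x \<le> int a \<and> 1 \<le> y \<and> y \<le> int b \<and> 1 \<le> z \<and> z \<le> int c) \<and>
     (\<forall>e\<in>cycle_edges xs. knight_edge e) \<and> {e1, f1, e2, f2} \<subseteq> cycle_edges xs \<and>
     simple_site e1 f1 \<and> simple_site e2 f2 \<and> pair_support e1 f1 \<inter> pair_support e2 f2 = {} \<and>
     (\<forall>i\<in>S. connectors i a b c \<subseteq> cycle_edges xs)"

lemma extendable_if_certificate:
  assumes "certificate a b c S xs e1 f1 e2 f2"
  shows "extendable a b c S"
proof -
  have C: "length xs = a * b * c" "distinct xs" "set xs \<subseteq> board a b c"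
    using assms unfolding certificate_def board_def by auto
  have "card (set xs) = card (board a b c)"
    using C(1,2) card_board distinct_card by metis
  then have "set xs = board a b c"
    using C(3) card_subset_eq[of "board a b c"] by (simp add: board_eq)
  moreover have "has_disjoint_sites xs"
    using assms is_site_pair_if_simple_site
    unfolding certificate_def has_disjoint_sites_def by meson
  ultimately have "extendable_tour a b c S xs"
    using assms unfolding certificate_def extendable_tour_def bisited_cycle_def by simp
  then show ?thesis unfolding extendable_def by blast
qed

section \<open>Boxes with sides at most 7\<close>

text \<open>The tours in the certificates were found by computer search.\<close>

lemma extendable_2_3_4: "extendable 2 3 4 {X, Y, Z}"
  by (rule extendable_if_certificate[of _ _ _ _
    "[(2,1,3),(1,1,1),(1,3,2),(1,2,4),(1,1,2),(1,3,3),(2,3,1),(2,1,2),(1,1,4),(1,2,2),(2,2,4),(2,3,2),(1,3,4),(1,1,3),(1,2,1),(2,2,3),(2,1,1),(1,3,1),(1,2,3),(2,2,1),(2,3,3),(2,1,4),(2,2,2),(2,3,4)]"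
    "((1,1,1),(1,3,2))" "((1,3,4),(1,1,3))" "((2,3,1),(2,1,2))" "((2,3,3),(2,1,4))"]) code_simp

lemma extendable_2_3_5: "extendable 2 3 5 {X, Y, Z}"
  by (rule extendable_if_certificate[of _ _ _ _
    "[(2,1,3),(1,1,1),(1,3,2),(1,2,4),(2,2,2),(2,3,4),(2,1,5),(1,3,5),(1,1,4),(1,2,2),(2,2,4),(2,3,2),(1,3,4),(1,1,5),(2,3,5),(2,1,4),(1,1,2),(1,3,1),(2,1,1),(1,1,3),(1,2,1),(2,2,3),(1,2,5),(1,3,3),(2,3,1),(2,1,2),(2,3,3),(2,2,1),(1,2,3),(2,2,5)]"
    "((2,3,5),(2,1,4))" "((2,1,2),(2,3,3))" "((2,1,1),(1,1,3))" "((1,3,3),(2,3,1))"]) code_simp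

lemma extendable_2_3_6: "extendable 2 3 6 {Z}"
  by (rule extendable_if_certificate[of _ _ _ _
    "[(1,1,1),(1,3,2),(2,1,2),(2,3,1),(2,2,3),(1,2,5),(1,1,3),(1,2,1),(1,3,3),(2,3,5),(1,1,5),(1,3,6),(2,1,6),(2,2,4),(1,2,6),(1,1,4),(1,2,2),(1,3,4),(2,3,2),(2,1,1),(1,3,1),(1,1,2),(2,1,4),(2,2,6),(2,3,4),(2,2,2),(1,2,4),(1,1,6),(2,3,6),(2,1,5),(1,3,5),(2,3,3),(2,2,5),(2,1,3),(2,2,1),(1,2,3)]"
    "((2,3,1),(2,2,3))" "((2,3,3),(2,2,5))" "((1,2,5),(1,1,3))" "((1,2,3),(1,1,1))"]) code_simp

lemma extendable_2_3_7: "extendable 2 3 7 {Z}"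
  by (rule extendable_if_certificate[of _ _ _ _
    "[(1,1,1),(1,3,2),(2,1,2),(2,3,1),(2,2,3),(1,2,1),(1,1,3),(2,1,1),(1,3,1),(2,3,3),(2,2,1),(1,2,3),(2,2,5),(1,2,7),(1,3,5),(2,3,7),(2,1,6),(1,1,4),(1,2,2),(2,2,4),(1,2,6),(1,3,4),(2,3,2),(1,1,2),(1,3,3),(2,3,5),(1,3,7),(2,1,7),(2,3,6),(1,1,6),(2,1,4),(2,2,2),(1,2,4),(2,2,6),(2,3,4),(2,1,5),(2,2,7),(1,2,5),(1,1,7),(1,3,6),(1,1,5),(2,1,3)]"
    "((2,2,3),(1,2,1))" "((1,2,3),(2,2,5))" "((1,1,3),(2,1,1))" "((1,1,5),(2,1,3))"]) code_simp

lemma extendable_2_4_3: "extendable 2 4 3 {X, Y, Z}"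
  by (rule extendable_if_certificate[of _ _ _ _
    "[(2,1,3),(1,1,1),(1,3,2),(1,1,3),(2,1,1),(2,3,2),(1,1,2),(1,3,3),(1,2,1),(2,2,3),(2,4,2),(1,2,2),(1,4,3),(2,4,1),(2,2,2),(1,4,2),(1,2,3),(1,3,1),(2,3,3),(2,1,2),(2,3,1),(2,4,3),(1,4,1),(2,2,1)]"
    "((2,1,3),(1,1,1))" "((1,3,1),(2,3,3))" "((1,2,1),(2,2,3))" "((2,4,3),(1,4,1))"]) code_simp

lemma extendable_2_4_4: "extendable 2 4 4 {X, Y, Z}"
  by (rule extendable_if_certificate[of _ _ _ _
    "[(2,1,3),(1,1,1),(1,3,2),(1,4,4),(2,2,4),(2,1,2),(2,3,1),(2,4,3),(1,2,3),(2,2,1),(1,4,1),(1,3,3),(1,1,4),(1,2,2),(1,4,3),(2,4,1),(2,3,3),(1,3,1),(2,1,1),(1,1,3),(1,3,4),(2,3,2),(1,1,2),(2,1,4),(2,2,2),(1,2,4),(2,4,4),(1,4,2),(1,2,1),(2,2,3),(2,4,2),(2,3,4)]"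
    "((2,1,3),(1,1,1))" "((2,3,3),(1,3,1))" "((1,2,3),(2,2,1))" "((1,4,3),(2,4,1))"]) code_simp

lemma extendable_2_4_5: "extendable 2 4 5 {X, Y, Z}"
  by (rule extendable_if_certificate[of _ _ _ _
    "[(2,1,3),(1,1,1),(1,3,2),(2,1,2),(1,1,4),(2,3,4),(2,1,5),(1,3,5),(1,2,3),(1,1,5),(2,3,5),(2,1,4),(1,3,4),(1,4,2),(2,2,2),(1,2,4),(2,4,4),(2,2,5),(1,4,5),(2,4,3),(2,3,1),(1,3,3),(1,4,1),(2,2,1),(2,3,3),(2,4,5),(1,4,3),(2,4,1),(1,2,1),(2,2,3),(2,4,2),(1,2,2),(2,2,4),(1,4,4),(1,2,5),(1,1,3),(2,1,1),(1,3,1),(1,1,2),(2,3,2)]"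
    "((1,3,2),(2,1,2))" "((2,1,4),(1,3,4))" "((1,1,4),(2,3,4))" "((1,1,2),(2,3,2))"]) code_simp

lemma extendable_2_5_3: "extendable 2 5 3 {X, Y, Z}"
  by (rule extendable_if_certificate[of _ _ _ _
    "[(2,1,3),(1,1,1),(1,3,2),(2,5,2),(2,3,3),(2,1,2),(2,3,1),(1,5,1),(2,5,3),(2,4,1),(2,2,2),(1,4,2),(1,2,3),(2,4,3),(1,4,1),(1,5,3),(2,5,1),(2,3,2),(1,1,2),(1,3,3),(1,5,2),(1,3,1),(2,1,1),(1,1,3),(1,2,1),(2,2,3),(1,4,3),(1,2,2),(2,4,2),(2,2,1)]"
    "((1,1,1),(1,3,2))" "((1,5,2),(1,3,1))" "((2,1,2),(2,3,1))" "((2,5,1),(2,3,2))"]) code_simp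

lemma extendable_2_5_4: "extendable 2 5 4 {X, Y, Z}"
  by (rule extendable_if_certificate[of _ _ _ _
    "[(2,1,3),(1,1,1),(1,3,2),(1,5,1),(2,3,1),(2,1,2),(1,1,4),(1,2,2),(2,2,4),(1,4,4),(2,4,2),(2,5,4),(1,5,2),(1,3,3),(1,5,4),(2,5,2),(2,4,4),(1,2,4),(1,1,2),(2,1,4),(1,3,4),(1,4,2),(1,2,1),(2,2,3),(1,4,3),(2,4,1),(2,2,2),(2,4,3),(1,2,3),(2,2,1),(1,4,1),(1,5,3),(2,5,1),(1,3,1),(2,3,3),(1,1,3),(2,1,1),(2,3,2),(2,5,3),(2,3,4)]"
    "((2,1,3),(1,1,1))" "((1,3,1),(2,3,3))" "((1,1,4),(1,2,2))" "((1,3,4),(1,4,2))"]) code_simp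

lemma extendable_2_5_5: "extendable 2 5 5 {Y, Z}"
  by (rule extendable_if_certificate[of _ _ _ _
    "[(2,1,3),(1,1,1),(1,3,2),(1,5,1),(2,3,1),(2,1,2),(1,1,4),(2,3,4),(1,5,4),(2,5,2),(2,4,4),(1,2,4),(2,2,2),(1,4,2),(1,2,1),(2,4,1),(2,5,3),(1,5,5),(1,4,3),(2,4,5),(1,2,5),(2,2,3),(2,1,5),(1,3,5),(2,5,5),(1,5,3),(2,5,1),(1,3,1),(2,1,1),(1,1,3),(2,3,3),(2,2,5),(1,4,5),(2,4,3),(1,2,3),(2,2,1),(1,4,1),(1,3,3),(2,3,5),(2,1,4),(1,1,2),(2,3,2),(1,5,2),(1,4,4),(2,2,4),(1,2,2),(2,4,2),(2,5,4),(1,3,4),(1,1,5)]"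
    "((1,5,1),(2,3,1))" "((1,3,1),(2,1,1))" "((1,1,4),(2,3,4))" "((1,1,2),(2,3,2))"]) code_simp

lemma extendable_2_6_3: "extendable 2 6 3 {Y, Z}"
  by (rule extendable_if_certificate[of _ _ _ _
    "[(2,1,3),(1,1,1),(1,3,2),(2,5,2),(2,3,3),(2,1,2),(2,3,1),(1,5,1),(1,6,3),(2,6,1),(2,5,3),(1,3,3),(1,1,2),(2,3,2),(1,5,2),(1,3,1),(2,1,1),(1,1,3),(1,2,1),(2,2,3),(1,4,3),(1,2,2),(2,4,2),(1,6,2),(1,4,1),(1,5,3),(2,5,1),(2,6,3),(1,6,1),(2,4,1),(2,2,2),(1,4,2),(2,6,2),(2,4,3),(1,2,3),(2,2,1)]"
    "((1,1,1),(1,3,2))" "((1,5,2),(1,3,1))" "((1,2,2),(2,4,2))" "((1,4,2),(2,6,2))"]) code_simp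

lemma extendable_2_7_3: "extendable 2 7 3 {X, Y, Z}"
  by (rule extendable_if_certificate[of _ _ _ _
    "[(2,1,3),(1,1,1),(1,3,2),(1,1,3),(2,1,1),(2,3,2),(1,1,2),(1,3,1),(1,2,3),(2,2,1),(2,3,3),(2,1,2),(2,3,1),(2,5,2),(1,7,2),(1,5,3),(2,7,3),(1,7,1),(2,5,1),(2,7,2),(1,5,2),(1,7,3),(2,7,1),(2,6,3),(1,6,1),(1,4,2),(2,2,2),(2,4,3),(2,6,2),(2,4,1),(1,2,1),(2,2,3),(2,4,2),(1,6,2),(1,4,3),(1,2,2),(1,4,1),(2,6,1),(1,6,3),(1,5,1),(2,5,3),(1,3,3)]"
    "((2,1,1),(2,3,2))" "((2,3,1),(2,5,2))" "((1,5,3),(2,7,3))" "((2,5,3),(1,3,3))"]) code_simp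

lemma extendable_3_2_4: "extendable 3 2 4 {X, Y, Z}"
  by (rule extendable_if_certificate[of _ _ _ _
    "[(2,1,3),(1,1,1),(1,2,3),(2,2,1),(3,2,3),(1,2,4),(2,2,2),(2,1,4),(1,1,2),(3,2,2),(2,2,4),(2,1,2),(3,1,4),(1,1,3),(2,1,1),(3,1,3),(1,1,4),(3,2,4),(3,1,2),(1,2,2),(3,2,1),(2,2,3),(1,2,1),(3,1,1)]"
    "((3,2,3),(1,2,4))" "((1,2,2),(3,2,1))" "((1,1,2),(3,2,2))" "((1,1,4),(3,2,4))"]) code_simp

lemma extendable_3_2_5: "extendable 3 2 5 {X, Y, Z}"
  by (rule extendable_if_certificate[of _ _ _ _
    "[(2,1,3),(1,1,1),(3,1,2),(2,1,4),(2,2,2),(3,2,4),(1,2,5),(3,1,5),(1,1,4),(2,1,2),(2,2,4),(1,2,2),(3,2,1),(2,2,3),(2,1,5),(1,1,3),(2,1,1),(3,1,3),(3,2,5),(1,2,4),(1,1,2),(3,1,1),(1,2,1),(3,2,2),(3,1,4),(1,1,5),(1,2,3),(2,2,1),(3,2,3),(2,2,5)]"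
    "((2,1,3),(1,1,1))" "((2,1,5),(1,1,3))" "((3,2,1),(2,2,3))" "((3,2,3),(2,2,5))"]) code_simp

lemma extendable_3_2_6: "extendable 3 2 6 {X, Z}"
  by (rule extendable_if_certificate[of _ _ _ _
    "[(2,1,3),(1,1,1),(3,1,2),(1,2,2),(3,2,1),(2,2,3),(2,1,1),(3,1,3),(2,1,5),(1,1,3),(1,2,1),(3,1,1),(1,1,2),(3,2,2),(2,2,4),(2,1,2),(3,1,4),(2,1,6),(1,1,4),(3,1,5),(1,1,6),(3,2,6),(1,2,5),(3,2,4),(2,2,2),(2,1,4),(2,2,6),(1,2,4),(3,2,5),(1,2,6),(3,1,6),(1,1,5),(1,2,3),(2,2,1),(3,2,3),(2,2,5)]"
    "((2,1,3),(1,1,1))" "((2,1,5),(1,1,3))" "((3,2,1),(2,2,3))" "((3,2,3),(2,2,5))"]) code_simp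

lemma extendable_3_2_7: "extendable 3 2 7 {Z}"
  by (rule extendable_if_certificate[of _ _ _ _
    "[(1,2,2),(3,2,1),(1,1,1),(3,1,2),(2,1,4),(2,2,2),(3,2,4),(2,2,6),(1,2,4),(1,1,2),(3,1,1),(1,2,1),(3,2,2),(2,2,4),(2,1,2),(1,1,4),(2,1,6),(3,1,4),(3,2,6),(1,1,6),(3,1,7),(1,2,7),(2,2,5),(1,2,3),(2,2,1),(2,1,3),(1,1,5),(2,1,7),(3,1,5),(3,2,7),(1,2,6),(3,1,6),(1,1,7),(2,1,5),(2,2,7),(3,2,5),(3,1,3),(2,1,1),(2,2,3),(1,2,5),(1,1,3),(3,2,3)]"
    "((3,2,1),(1,1,1))" "((1,1,3),(3,2,3))" "((3,1,2),(2,1,4))" "((2,1,6),(3,1,4))"]) code_simp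

lemma extendable_3_3_4: "extendable 3 3 4 {X, Y, Z}"
  by (rule extendable_if_certificate[of _ _ _ _
    "[(2,1,3),(1,1,1),(1,3,2),(3,3,1),(2,1,1),(2,2,3),(1,2,1),(3,1,1),(1,1,2),(2,3,2),(2,2,4),(3,2,2),(3,3,4),(1,2,4),(2,2,2),(2,1,4),(3,1,2),(3,2,4),(1,3,4),(3,3,3),(1,2,3),(2,2,1),(3,2,3),(1,1,3),(2,3,3),(1,3,1),(3,2,1),(3,1,3),(1,1,4),(1,2,2),(3,3,2),(1,3,3),(2,3,1),(2,1,2),(3,1,4),(2,3,4)]"
    "((2,1,3),(1,1,1))" "((2,3,3),(1,3,1))" "((1,3,2),(3,3,1))" "((3,1,1),(1,1,2))"]) code_simp

lemma extendable_3_3_6: "extendable 3 3 6 {X, Y, Z}"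
  by (rule extendable_if_certificate[of _ _ _ _
    "[(2,1,3),(1,1,1),(1,3,2),(3,3,1),(2,1,1),(2,3,2),(3,1,2),(1,2,2),(3,2,1),(1,3,1),(3,3,2),(3,1,1),(1,2,1),(2,2,3),(1,2,5),(1,1,3),(2,3,3),(2,2,1),(3,2,3),(2,2,5),(1,2,3),(3,2,2),(2,2,4),(2,1,2),(3,1,4),(2,1,6),(1,3,6),(3,2,6),(1,1,6),(2,3,6),(2,1,5),(3,3,5),(3,1,6),(1,1,5),(2,3,5),(3,1,5),(3,3,6),(2,3,4),(2,2,6),(3,2,4),(2,2,2),(2,1,4),(1,3,4),(1,2,6),(1,1,4),(3,1,3),(3,2,5),(1,3,5),(3,3,4),(1,2,4),(1,1,2),(1,3,3),(2,3,1),(3,3,3)]"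
    "((1,1,1),(1,3,2))" "((3,3,2),(3,1,1))" "((3,3,1),(2,1,1))" "((3,3,3),(2,1,3))"]) code_simp

lemma extendable_3_4_2: "extendable 3 4 2 {X, Y, Z}"
  by (rule extendable_if_certificate[of _ _ _ _
    "[(1,1,1),(1,3,2),(3,4,2),(2,2,2),(1,4,2),(3,3,2),(2,1,2),(2,3,1),(3,1,1),(1,1,2),(2,3,2),(2,1,1),(1,3,1),(3,4,1),(3,2,2),(2,4,2),(2,2,1),(1,4,1),(1,2,2),(3,1,2),(3,3,1),(1,2,1),(2,4,1),(3,2,1)]"
    "((1,4,2),(3,3,2))" "((1,2,2),(3,1,2))" "((1,3,1),(3,4,1))" "((3,2,1),(1,1,1))"]) code_simp

lemma extendable_3_4_3: "extendable 3 4 3 {X, Y, Z}"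
  by (rule extendable_if_certificate[of _ _ _ _
    "[(2,1,3),(1,1,1),(1,3,2),(1,1,3),(3,1,2),(2,3,2),(2,1,1),(3,3,1),(2,3,3),(2,1,2),(3,3,2),(3,1,3),(1,1,2),(3,1,1),(2,3,1),(3,3,3),(1,2,3),(1,3,1),(3,2,1),(2,2,3),(1,4,3),(2,4,1),(1,2,1),(1,4,2),(2,2,2),(3,4,2),(1,4,1),(2,4,3),(3,4,1),(2,2,1),(3,2,3),(1,2,2),(2,4,2),(3,2,2),(3,4,3),(1,3,3)]"
    "((1,3,2),(1,1,3))" "((3,3,2),(3,1,3))" "((3,2,1),(2,2,3))" "((2,4,3),(3,4,1))"]) code_simp

lemma extendable_3_4_4: "extendable 3 4 4 {X, Y, Z}"
  by (rule extendable_if_certificate[of _ _ _ _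
    "[(2,1,3),(1,1,1),(1,3,2),(1,4,4),(2,4,2),(3,4,4),(2,2,4),(2,1,2),(1,1,4),(3,2,4),(2,4,4),(2,3,2),(3,1,2),(2,1,4),(1,3,4),(1,2,2),(1,4,1),(2,2,1),(3,2,3),(2,4,3),(3,4,1),(1,4,2),(2,2,2),(3,4,2),(3,3,4),(1,2,4),(1,4,3),(2,4,1),(3,4,3),(2,2,3),(3,2,1),(3,3,3),(2,3,1),(3,1,1),(1,2,1),(3,3,1),(2,1,1),(1,1,3),(2,3,3),(3,1,3),(1,2,3),(1,3,1),(3,3,2),(1,3,3),(1,1,2),(3,2,2),(3,1,4),(2,3,4)]"
    "((3,4,4),(2,2,4))" "((2,2,2),(3,4,2))" "((1,1,4),(3,2,4))" "((1,1,2),(3,2,2))"]) code_simp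

lemma extendable_3_5_2: "extendable 3 5 2 {X, Y, Z}"
  by (rule extendable_if_certificate[of _ _ _ _
    "[(1,1,1),(1,3,2),(2,1,2),(2,3,1),(2,5,2),(3,3,2),(3,1,1),(1,1,2),(3,2,2),(1,2,1),(2,4,1),(2,2,2),(1,4,2),(3,5,2),(1,5,1),(3,4,1),(2,2,1),(2,4,2),(1,2,2),(3,1,2),(3,3,1),(2,5,1),(2,3,2),(2,1,1),(1,3,1),(1,5,2),(3,5,1),(1,4,1),(3,4,2),(3,2,1)]"
    "((1,1,1),(1,3,2))" "((3,3,2),(3,1,1))" "((2,1,2),(2,3,1))" "((2,5,1),(2,3,2))"]) code_simp

lemma extendable_3_6_2: "extendable 3 6 2 {Y}"
  by (rule extendable_if_certificate[of _ _ _ _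
    "[(3,2,1),(1,1,1),(3,1,2),(1,2,2),(2,4,2),(2,2,1),(1,4,1),(2,6,1),(3,4,1),(3,2,2),(1,1,2),(3,1,1),(1,2,1),(2,4,1),(2,2,2),(1,4,2),(2,6,2),(3,4,2),(1,5,2),(3,6,2),(1,6,1),(3,5,1),(2,3,1),(2,1,2),(3,3,2),(2,5,2),(1,3,2),(1,5,1),(3,6,1),(1,6,2),(3,5,2),(2,3,2),(2,5,1),(3,3,1),(2,1,1),(1,3,1)]"
    "((1,2,2),(2,4,2))" "((1,4,2),(2,6,2))" "((1,4,1),(2,6,1))" "((1,2,1),(2,4,1))"]) code_simp

lemma extendable_3_6_3: "extendable 3 6 3 {X, Y, Z}"
  by (rule extendable_if_certificate[of _ _ _ _
    "[(2,1,3),(1,1,1),(1,3,2),(2,5,2),(3,3,2),(3,1,1),(1,1,2),(3,1,3),(2,1,1),(1,1,3),(3,1,2),(2,3,2),(3,5,2),(1,6,2),(3,6,1),(2,6,3),(1,6,1),(1,5,3),(2,5,1),(3,3,1),(1,2,1),(3,2,2),(2,4,2),(2,2,3),(3,4,3),(3,6,2),(1,5,2),(3,5,1),(3,6,3),(3,4,2),(2,6,2),(1,4,2),(2,2,2),(2,4,1),(3,2,1),(1,2,2),(1,4,1),(1,3,3),(2,5,3),(1,5,1),(1,4,3),(3,5,3),(1,6,3),(2,6,1),(3,4,1),(2,2,1),(3,2,3),(2,4,3),(1,2,3),(1,3,1),(2,3,3),(2,1,2),(2,3,1),(3,3,3)]"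
    "((2,1,3),(1,1,1))" "((1,3,1),(2,3,3))" "((2,5,2),(3,3,2))" "((3,1,2),(2,3,2))"]) code_simp

lemma extendable_3_7_2: "extendable 3 7 2 {Y}"
  by (rule extendable_if_certificate[of _ _ _ _
    "[(3,2,1),(1,1,1),(3,1,2),(1,2,2),(2,4,2),(2,2,1),(1,4,1),(2,6,1),(3,4,1),(3,2,2),(1,1,2),(3,1,1),(1,2,1),(2,4,1),(2,2,2),(1,4,2),(2,6,2),(3,4,2),(3,6,1),(1,6,2),(3,7,2),(1,7,1),(1,5,2),(2,7,2),(3,5,2),(2,3,2),(2,1,1),(3,3,1),(2,5,1),(3,7,1),(1,6,1),(3,6,2),(1,7,2),(2,5,2),(1,3,2),(2,1,2),(2,3,1),(1,5,1),(2,7,1),(3,5,1),(3,3,2),(1,3,1)]"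
    "((1,1,1),(3,1,2))" "((3,3,2),(1,3,1))" "((1,2,2),(2,4,2))" "((1,4,2),(2,6,2))"]) code_simp

lemma extendable_4_2_3: "extendable 4 2 3 {X, Y, Z}"
  by (rule extendable_if_certificate[of _ _ _ _
    "[(2,1,3),(1,1,1),(3,1,2),(1,1,3),(3,2,3),(1,2,2),(3,2,1),(4,2,3),(2,2,2),(4,1,2),(2,1,1),(4,2,1),(4,1,3),(3,1,1),(1,1,2),(3,2,2),(1,2,1),(2,2,3),(4,2,2),(2,1,2),(4,1,1),(3,1,3),(1,2,3),(2,2,1)]"
    "((2,1,3),(1,1,1))" "((4,1,3),(3,1,1))" "((3,2,1),(4,2,3))" "((1,2,1),(2,2,3))"]) code_simp

lemma extendable_4_2_4: "extendable 4 2 4 {X, Y, Z}"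
  by (rule extendable_if_certificate[of _ _ _ _
    "[(2,1,3),(1,1,1),(1,2,3),(2,2,1),(4,1,1),(3,1,3),(1,1,4),(2,1,2),(4,2,2),(3,2,4),(3,1,2),(4,1,4),(2,2,4),(1,2,2),(3,2,1),(4,2,3),(2,2,2),(1,2,4),(1,1,2),(2,1,4),(4,2,4),(3,2,2),(3,1,4),(4,1,2),(2,1,1),(4,2,1),(4,1,3),(2,2,3),(1,2,1),(1,1,3),(3,2,3),(3,1,1)]"
    "((1,1,1),(1,2,3))" "((3,2,3),(3,1,1))" "((2,2,1),(4,1,1))" "((4,1,3),(2,2,3))"]) code_simp

lemma extendable_4_2_5: "extendable 4 2 5 {X, Y, Z}"
  by (rule extendable_if_certificate[of _ _ _ _
    "[(2,1,3),(1,1,1),(1,2,3),(2,2,1),(4,1,1),(2,1,2),(4,2,2),(4,1,4),(3,1,2),(1,2,2),(3,2,1),(4,2,3),(2,2,4),(4,2,5),(2,1,5),(1,1,3),(1,2,1),(3,1,1),(4,1,3),(3,1,5),(1,2,5),(3,2,4),(1,1,4),(3,1,3),(4,1,5),(2,2,5),(3,2,3),(4,2,1),(2,1,1),(2,2,3),(3,2,5),(1,2,4),(2,2,2),(4,1,2),(4,2,4),(2,1,4),(1,1,2),(3,2,2),(3,1,4),(1,1,5)]"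
    "((2,1,3),(1,1,1))" "((2,1,5),(1,1,3))" "((1,2,3),(2,2,1))" "((3,2,3),(4,2,1))"]) code_simp

lemma extendable_4_3_2: "extendable 4 3 2 {X, Y, Z}"
  by (rule extendable_if_certificate[of _ _ _ _
    "[(1,1,1),(1,3,2),(3,2,2),(1,2,1),(3,3,1),(4,1,1),(2,2,1),(4,2,2),(2,1,2),(2,3,1),(4,2,1),(2,2,2),(4,3,2),(3,1,2),(1,2,2),(3,3,2),(4,1,2),(4,3,1),(3,1,1),(1,1,2),(2,3,2),(2,1,1),(1,3,1),(3,2,1)]"
    "((3,3,1),(4,1,1))" "((2,1,1),(1,3,1))" "((2,1,2),(2,3,1))" "((4,1,2),(4,3,1))"]) code_simp

lemma extendable_4_3_3: "extendable 4 3 3 {X, Y, Z}"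
  by (rule extendable_if_certificate[of _ _ _ _
    "[(2,1,3),(1,1,1),(1,3,2),(3,2,2),(1,1,2),(1,3,1),(1,2,3),(2,2,1),(4,2,2),(2,3,2),(4,3,1),(3,1,1),(1,2,1),(1,3,3),(2,3,1),(3,3,3),(4,1,3),(2,2,3),(3,2,1),(4,2,3),(2,2,2),(4,2,1),(4,3,3),(3,3,1),(3,2,3),(1,2,2),(3,1,2),(1,1,3),(2,1,1),(3,1,3),(4,1,1),(4,3,2),(2,3,3),(2,1,2),(3,3,2),(4,1,2)]"
    "((1,3,1),(1,2,3))" "((3,3,1),(3,2,3))" "((1,3,3),(2,3,1))" "((1,1,3),(2,1,1))"]) code_simp

lemma extendable_4_4_2: "extendable 4 4 2 {X, Y, Z}"
  by (rule extendable_if_certificate[of _ _ _ _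
    "[(1,1,1),(1,3,2),(3,4,2),(1,4,1),(3,3,1),(4,1,1),(2,2,1),(4,2,2),(2,1,2),(3,3,2),(1,2,2),(3,1,2),(4,3,2),(2,4,2),(4,4,1),(2,3,1),(3,1,1),(1,2,1),(1,4,2),(2,2,2),(4,1,2),(4,3,1),(2,4,1),(4,4,2),(3,2,2),(1,1,2),(2,3,2),(2,1,1),(4,2,1),(3,4,1),(1,3,1),(3,2,1)]"
    "((1,3,2),(3,4,2))" "((3,2,2),(1,1,2))" "((1,4,1),(3,3,1))" "((3,1,1),(1,2,1))"]) code_simp

lemma extendable_4_5_2: "extendable 4 5 2 {X, Y, Z}"
  by (rule extendable_if_certificate[of _ _ _ _
    "[(1,1,1),(1,3,2),(1,5,1),(3,4,1),(4,2,1),(4,4,2),(3,2,2),(1,1,2),(3,1,1),(1,2,1),(1,4,2),(3,5,2),(2,3,2),(2,1,1),(4,1,2),(4,3,1),(2,4,1),(4,5,1),(2,5,2),(2,3,1),(3,5,1),(1,5,2),(1,3,1),(2,5,1),(3,3,1),(1,4,1),(2,2,1),(4,1,1),(2,1,2),(4,2,2),(3,4,2),(2,2,2),(4,3,2),(3,1,2),(1,2,2),(3,3,2),(4,5,2),(2,4,2),(4,4,1),(3,2,1)]"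
    "((1,1,1),(1,3,2))" "((1,5,2),(1,3,1))" "((3,4,1),(4,2,1))" "((1,4,1),(2,2,1))"]) code_simp

lemma extendable_5_2_3: "extendable 5 2 3 {X, Y, Z}"
  by (rule extendable_if_certificate[of _ _ _ _
    "[(2,1,3),(1,1,1),(1,2,3),(2,2,1),(4,2,2),(2,1,2),(4,1,1),(5,1,3),(5,2,1),(4,2,3),(2,2,2),(4,2,1),(5,2,3),(5,1,1),(4,1,3),(2,2,3),(1,2,1),(3,2,2),(1,1,2),(3,1,3),(5,1,2),(3,1,1),(3,2,3),(1,2,2),(3,2,1),(5,2,2),(3,1,2),(1,1,3),(2,1,1),(4,1,2)]"
    "((1,1,1),(1,2,3))" "((3,1,1),(3,2,3))" "((1,2,1),(3,2,2))" "((3,2,1),(5,2,2))"]) code_simp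

lemma extendable_5_2_4: "extendable 5 2 4 {X, Y, Z}"
  by (rule extendable_if_certificate[of _ _ _ _
    "[(2,1,3),(1,1,1),(1,2,3),(2,2,1),(4,1,1),(5,1,3),(5,2,1),(4,2,3),(2,2,4),(4,1,4),(5,1,2),(5,2,4),(4,2,2),(2,1,2),(3,1,4),(4,1,2),(5,1,4),(3,2,4),(2,2,2),(1,2,4),(1,1,2),(2,1,4),(4,2,4),(3,2,2),(1,2,1),(1,1,3),(2,1,1),(3,1,3),(1,1,4),(1,2,2),(3,2,1),(2,2,3),(4,1,3),(4,2,1),(5,2,3),(5,1,1),(3,1,2),(5,2,2),(3,2,3),(3,1,1)]"
    "((1,1,1),(1,2,3))" "((3,2,3),(3,1,1))" "((2,2,1),(4,1,1))" "((2,2,3),(4,1,3))"]) code_simp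

lemma extendable_5_2_5: "extendable 5 2 5 {X, Z}"
  by (rule extendable_if_certificate[of _ _ _ _
    "[(2,1,3),(1,1,1),(1,2,3),(2,2,1),(4,1,1),(5,1,3),(5,2,1),(4,2,3),(5,2,5),(3,1,5),(1,2,5),(1,1,3),(2,1,1),(4,2,1),(5,2,3),(5,1,5),(3,2,5),(5,2,4),(4,2,2),(3,2,4),(1,1,4),(2,1,2),(2,2,4),(1,2,2),(3,2,1),(5,1,1),(3,1,2),(4,1,4),(5,1,2),(3,2,2),(1,2,1),(2,2,3),(2,1,5),(4,2,5),(4,1,3),(3,1,1),(3,2,3),(5,2,2),(4,2,4),(2,2,5),(4,1,5),(3,1,3),(5,1,4),(4,1,2),(2,2,2),(2,1,4),(1,1,2),(1,2,4),(3,1,4),(1,1,5)]"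
    "((2,1,3),(1,1,1))" "((4,1,3),(3,1,1))" "((5,1,3),(5,2,1))" "((5,2,3),(5,1,5))"]) code_simp

lemma extendable_5_3_2: "extendable 5 3 2 {X, Y, Z}"
  by (rule extendable_if_certificate[of _ _ _ _
    "[(1,1,1),(1,3,2),(2,1,2),(4,2,2),(2,2,1),(4,3,1),(2,3,2),(2,1,1),(1,3,1),(1,1,2),(3,2,2),(1,2,1),(3,3,1),(5,2,1),(3,1,1),(5,1,2),(5,3,1),(4,1,1),(4,3,2),(2,3,1),(4,2,1),(2,2,2),(4,1,2),(5,3,2),(5,1,1),(3,1,2),(1,2,2),(3,3,2),(5,2,2),(3,2,1)]"
    "((2,3,2),(2,1,1))" "((4,1,1),(4,3,2))" "((3,2,2),(1,2,1))" "((5,2,2),(3,2,1))"]) code_simp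

lemma extendable_5_4_2: "extendable 5 4 2 {X, Y, Z}"
  by (rule extendable_if_certificate[of _ _ _ _
    "[(1,1,1),(1,3,2),(3,4,2),(5,4,1),(5,2,2),(4,4,2),(2,4,1),(1,2,1),(1,4,2),(2,2,2),(4,2,1),(3,4,1),(5,4,2),(4,2,2),(2,1,2),(4,1,1),(2,2,1),(1,4,1),(1,2,2),(2,4,2),(4,3,2),(2,3,1),(4,4,1),(5,2,1),(3,3,1),(5,3,2),(3,2,2),(1,1,2),(3,1,1),(5,1,2),(5,3,1),(3,3,2),(4,1,2),(4,3,1),(5,1,1),(3,1,2),(2,3,2),(2,1,1),(1,3,1),(3,2,1)]"
    "((1,3,2),(3,4,2))" "((3,2,2),(1,1,2))" "((4,2,1),(3,4,1))" "((2,2,1),(1,4,1))"]) code_simp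

lemma extendable_5_5_2: "extendable 5 5 2 {X, Y}"
  by (rule extendable_if_certificate[of _ _ _ _
    "[(1,1,1),(1,3,2),(1,5,1),(2,3,1),(2,5,2),(4,5,1),(2,4,1),(4,4,2),(5,2,2),(3,1,2),(1,2,2),(1,4,1),(2,2,1),(4,1,1),(2,1,2),(4,2,2),(5,4,2),(5,2,1),(4,4,1),(2,5,1),(4,5,2),(2,4,2),(4,3,2),(5,1,2),(5,3,1),(5,5,2),(3,5,1),(5,4,1),(4,2,1),(2,2,2),(3,4,2),(1,5,2),(2,3,2),(1,1,2),(3,2,2),(3,4,1),(5,5,1),(4,3,1),(3,1,1),(1,2,1),(1,4,2),(3,5,2),(3,3,1),(2,1,1),(1,3,1),(3,3,2),(4,1,2),(5,3,2),(5,1,1),(3,2,1)]"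
    "((1,5,1),(2,3,1))" "((2,1,1),(1,3,1))" "((5,2,2),(3,1,2))" "((1,1,2),(3,2,2))"]) code_simp

lemma extendable_6_2_3: "extendable 6 2 3 {X, Z}"
  by (rule extendable_if_certificate[of _ _ _ _
    "[(2,1,3),(1,1,1),(1,2,3),(2,2,1),(3,2,3),(1,2,2),(3,2,1),(5,2,2),(3,1,2),(1,1,3),(1,2,1),(2,2,3),(2,1,1),(4,1,2),(2,2,2),(4,2,1),(6,2,2),(4,2,3),(5,2,1),(6,2,3),(6,1,1),(5,1,3),(4,1,1),(2,1,2),(4,2,2),(6,1,2),(4,1,3),(5,1,1),(6,1,3),(6,2,1),(5,2,3),(3,2,2),(1,1,2),(3,1,3),(5,1,2),(3,1,1)]"
    "((3,2,3),(1,2,2))" "((5,2,3),(3,2,2))" "((3,1,2),(1,1,3))" "((3,1,3),(5,1,2))"]) code_simp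

lemma extendable_6_3_2: "extendable 6 3 2 {X, Y, Z}"
  by (rule extendable_if_certificate[of _ _ _ _
    "[(1,1,1),(1,3,2),(2,1,2),(2,3,1),(4,2,1),(2,2,2),(4,1,2),(6,2,2),(4,3,2),(5,1,2),(6,3,2),(6,1,1),(5,3,1),(4,1,1),(2,2,1),(4,2,2),(6,2,1),(4,3,1),(2,3,2),(2,1,1),(1,3,1),(1,1,2),(3,2,2),(1,2,1),(3,1,1),(5,2,1),(3,3,1),(5,3,2),(6,1,2),(6,3,1),(5,1,1),(3,1,2),(1,2,2),(3,3,2),(5,2,2),(3,2,1)]"
    "((2,3,1),(4,2,1))" "((6,2,1),(4,3,1))" "((3,2,2),(1,2,1))" "((5,2,2),(3,2,1))"]) code_simp

lemma extendable_6_3_3: "extendable 6 3 3 {X}"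
  by (rule extendable_if_certificate[of _ _ _ _
    "[(2,1,3),(1,1,1),(1,2,3),(2,2,1),(4,2,2),(6,1,2),(6,3,1),(5,1,1),(6,1,3),(6,2,1),(6,3,3),(5,1,3),(5,3,2),(4,1,2),(6,2,2),(4,2,3),(2,2,2),(4,3,2),(4,1,1),(2,1,2),(1,3,2),(3,2,2),(5,2,1),(6,2,3),(6,1,1),(6,3,2),(5,1,2),(5,3,1),(5,2,3),(4,2,1),(2,3,1),(1,3,3),(1,2,1),(2,2,3),(4,1,3),(3,3,3),(4,3,1),(3,1,1),(1,1,2),(1,3,1),(2,3,3),(1,1,3),(2,1,1),(3,1,3),(4,3,3),(3,3,1),(3,2,3),(5,3,3),(3,3,2),(1,2,2),(3,2,1),(5,2,2),(3,1,2),(2,3,2)]"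
    "((2,1,3),(1,1,1))" "((1,3,1),(2,3,3))" "((6,3,1),(5,1,1))" "((6,3,3),(5,1,3))"]) code_simp

lemma extendable_7_2_3: "extendable 7 2 3 {X, Y, Z}"
  by (rule extendable_if_certificate[of _ _ _ _
    "[(2,1,3),(1,1,1),(1,2,3),(2,2,1),(4,2,2),(2,1,2),(4,1,1),(6,1,2),(4,1,3),(2,2,3),(1,2,1),(3,1,1),(1,1,2),(3,2,2),(5,1,2),(7,2,2),(5,2,1),(7,1,1),(6,1,3),(6,2,1),(7,2,3),(5,1,3),(7,1,2),(5,2,2),(3,1,2),(1,1,3),(3,2,3),(1,2,2),(3,2,1),(5,1,1),(7,2,1),(6,2,3),(6,1,1),(7,1,3),(5,2,3),(3,1,3),(2,1,1),(4,1,2),(2,2,2),(4,2,1),(6,2,2),(4,2,3)]"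
    "((2,2,1),(4,2,2))" "((4,2,1),(6,2,2))" "((4,1,1),(6,1,2))" "((2,1,1),(4,1,2))"]) code_simp

lemma extendable_7_3_2: "extendable 7 3 2 {X, Y}"
  by (rule extendable_if_certificate[of _ _ _ _
    "[(1,1,1),(1,3,2),(2,1,2),(2,3,1),(3,1,1),(1,2,1),(3,2,2),(1,1,2),(2,3,2),(4,2,2),(2,2,1),(4,3,1),(6,2,1),(4,1,1),(6,1,2),(7,3,2),(7,1,1),(5,2,1),(3,3,1),(2,1,1),(4,2,1),(2,2,2),(4,1,2),(6,2,2),(4,3,2),(6,3,1),(5,1,1),(7,1,2),(7,3,1),(5,3,2),(7,2,2),(5,1,2),(6,3,2),(6,1,1),(5,3,1),(7,2,1),(5,2,2),(3,1,2),(1,2,2),(3,3,2),(1,3,1),(3,2,1)]"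
    "((3,2,2),(1,1,2))" "((5,2,2),(3,1,2))" "((2,3,2),(4,2,2))" "((6,2,2),(4,3,2))"]) code_simp


lemma extendable_2_4_6: "extendable 2 4 6 {X, Y, Z}"
  using extendable_join_z[OF extendable_2_4_3 extendable_2_4_3] by simp

lemma extendable_2_6_4: "extendable 2 6 4 {X, Y, Z}"
  using extendable_join_y[OF extendable_2_3_4 extendable_2_3_4] by simp

lemma extendable_4_2_6: "extendable 4 2 6 {X, Y, Z}"
  using extendable_join_z[OF extendable_4_2_3 extendable_4_2_3] by simp

lemma extendable_4_3_4: "extendable 4 3 4 {X, Y, Z}"
  using extendable_join_x[OF extendable_2_3_4 extendable_2_3_4] by simp

lemma extendable_4_4_3: "extendable 4 4 3 {X, Y, Z}"
  using extendable_join_x[OF extendable_2_4_3 extendable_2_4_3] by simp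

lemma extendable_4_6_2: "extendable 4 6 2 {X, Y, Z}"
  using extendable_join_y[OF extendable_4_3_2 extendable_4_3_2] by simp

lemma extendable_6_2_4: "extendable 6 2 4 {X, Y, Z}"
  using extendable_join_x[OF extendable_3_2_4 extendable_3_2_4] by simp

lemma extendable_6_4_2: "extendable 6 4 2 {X, Y, Z}"
  using extendable_join_x[OF extendable_3_4_2 extendable_3_4_2] by simp

lemma extendable_2_4_7: "extendable 2 4 7 {X, Y, Z}"
  using extendable_join_z[OF extendable_2_4_3 extendable_2_4_4] by simp

lemma extendable_2_7_4: "extendable 2 7 4 {X, Y, Z}"
  using extendable_join_y[OF extendable_2_4_4 extendable_2_3_4] by simp

lemma extendable_4_2_7: "extendable 4 2 7 {X, Y, Z}"
  using extendable_join_z[OF extendable_4_2_4 extendable_4_2_3] by simp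

lemma extendable_4_7_2: "extendable 4 7 2 {X, Y, Z}"
  using extendable_join_y[OF extendable_4_4_2 extendable_4_3_2] by simp

lemma extendable_7_2_4: "extendable 7 2 4 {X, Y, Z}"
  using extendable_join_x[OF extendable_4_2_4 extendable_3_2_4] by simp

lemma extendable_7_4_2: "extendable 7 4 2 {X, Y, Z}"
  using extendable_join_x[OF extendable_4_4_2 extendable_3_4_2] by simp

lemma extendable_2_5_6: "extendable 2 5 6 {X, Y, Z}"
  using extendable_join_z[OF extendable_2_5_3 extendable_2_5_3] by simp

lemma extendable_2_6_5: "extendable 2 6 5 {X, Y, Z}"
  using extendable_join_y[OF extendable_2_3_5 extendable_2_3_5] by simp

lemma extendable_3_4_5: "extendable 3 4 5 {X, Y, Z}"
  using extendable_join_z[OF extendable_3_4_3 extendable_3_4_2] by simp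

lemma extendable_3_5_4: "extendable 3 5 4 {X, Y, Z}"
  using extendable_join_y[OF extendable_3_3_4 extendable_3_2_4] by simp

lemma extendable_4_3_5: "extendable 4 3 5 {X, Y, Z}"
  using extendable_join_z[OF extendable_4_3_3 extendable_4_3_2] by simp

lemma extendable_4_5_3: "extendable 4 5 3 {X, Y, Z}"
  using extendable_join_y[OF extendable_4_3_3 extendable_4_2_3] by simp

lemma extendable_5_2_6: "extendable 5 2 6 {X, Y, Z}"
  using extendable_join_z[OF extendable_5_2_3 extendable_5_2_3] by simp

lemma extendable_5_3_4: "extendable 5 3 4 {X, Y, Z}"
  using extendable_join_x[OF extendable_3_3_4 extendable_2_3_4] by simp

lemma extendable_5_4_3: "extendable 5 4 3 {X, Y, Z}"
  using extendable_join_x[OF extendable_3_4_3 extendable_2_4_3] by simp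

lemma extendable_5_6_2: "extendable 5 6 2 {X, Y, Z}"
  using extendable_join_y[OF extendable_5_3_2 extendable_5_3_2] by simp

lemma extendable_6_2_5: "extendable 6 2 5 {X, Y, Z}"
  using extendable_join_x[OF extendable_3_2_5 extendable_3_2_5] by simp

lemma extendable_6_5_2: "extendable 6 5 2 {X, Y, Z}"
  using extendable_join_x[OF extendable_3_5_2 extendable_3_5_2] by simp

lemma extendable_4_4_4: "extendable 4 4 4 {X, Y, Z}"
  using extendable_join_x[OF extendable_2_4_4 extendable_2_4_4] by simp

lemma extendable_2_5_7: "extendable 2 5 7 {X, Y, Z}"
  using extendable_join_z[OF extendable_2_5_3 extendable_2_5_4] by simp

lemma extendable_2_7_5: "extendable 2 7 5 {X, Y, Z}"
  using extendable_join_y[OF extendable_2_3_5 extendable_2_4_5] by simp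

lemma extendable_5_2_7: "extendable 5 2 7 {X, Y, Z}"
  using extendable_join_z[OF extendable_5_2_3 extendable_5_2_4] by simp

lemma extendable_5_7_2: "extendable 5 7 2 {X, Y, Z}"
  using extendable_join_y[OF extendable_5_3_2 extendable_5_4_2] by simp

lemma extendable_7_2_5: "extendable 7 2 5 {X, Y, Z}"
  using extendable_join_x[OF extendable_4_2_5 extendable_3_2_5] by simp

lemma extendable_7_5_2: "extendable 7 5 2 {X, Y, Z}"
  using extendable_join_x[OF extendable_3_5_2 extendable_4_5_2] by simp

lemma extendable_2_6_6: "extendable 2 6 6 {Y, Z}"
  using extendable_join_z[OF extendable_2_6_3 extendable_2_6_3] by simp

lemma extendable_3_4_6: "extendable 3 4 6 {X, Y, Z}"
  using extendable_join_z[OF extendable_3_4_4 extendable_3_4_2] by simp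

lemma extendable_3_6_4: "extendable 3 6 4 {X, Y, Z}"
  using extendable_join_y[OF extendable_3_4_4 extendable_3_2_4] by simp

lemma extendable_4_3_6: "extendable 4 3 6 {X, Y, Z}"
  using extendable_join_z[OF extendable_4_3_4 extendable_4_3_2] by simp

lemma extendable_4_6_3: "extendable 4 6 3 {X, Y, Z}"
  using extendable_join_y[OF extendable_4_3_3 extendable_4_3_3] by simp

lemma extendable_6_2_6: "extendable 6 2 6 {X, Z}"
  using extendable_join_z[OF extendable_6_2_3 extendable_6_2_3] by simp

lemma extendable_6_3_4: "extendable 6 3 4 {X, Y, Z}"
  using extendable_join_x[OF extendable_4_3_4 extendable_2_3_4] by simp

lemma extendable_6_4_3: "extendable 6 4 3 {X, Y, Z}"
  using extendable_join_x[OF extendable_4_4_3 extendable_2_4_3] by simp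

lemma extendable_6_6_2: "extendable 6 6 2 {X, Y, Z}"
  using extendable_join_y[OF extendable_6_3_2 extendable_6_3_2] by simp

lemma extendable_4_4_5: "extendable 4 4 5 {X, Y, Z}"
  using extendable_join_x[OF extendable_2_4_5 extendable_2_4_5] by simp

lemma extendable_4_5_4: "extendable 4 5 4 {X, Y, Z}"
  using extendable_join_y[OF extendable_4_3_4 extendable_4_2_4] by simp

lemma extendable_5_4_4: "extendable 5 4 4 {X, Y, Z}"
  using extendable_join_x[OF extendable_2_4_4 extendable_3_4_4] by simp

lemma extendable_2_6_7: "extendable 2 6 7 {X, Y, Z}"
  using extendable_join_z[OF extendable_2_6_4 extendable_2_6_3] by simp

lemma extendable_2_7_6: "extendable 2 7 6 {X, Y, Z}"
  using extendable_join_z[OF extendable_2_7_3 extendable_2_7_3] by simp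

lemma extendable_3_4_7: "extendable 3 4 7 {X, Y, Z}"
  using extendable_join_z[OF extendable_3_4_5 extendable_3_4_2] by simp

lemma extendable_3_7_4: "extendable 3 7 4 {X, Y, Z}"
  using extendable_join_y[OF extendable_3_5_4 extendable_3_2_4] by simp

lemma extendable_4_3_7: "extendable 4 3 7 {X, Y, Z}"
  using extendable_join_z[OF extendable_4_3_3 extendable_4_3_4] by simp

lemma extendable_4_7_3: "extendable 4 7 3 {X, Y, Z}"
  using extendable_join_y[OF extendable_4_3_3 extendable_4_4_3] by simp

lemma extendable_6_2_7: "extendable 6 2 7 {X, Z}"
  using extendable_join_z[OF extendable_6_2_3 extendable_6_2_4] by simp

lemma extendable_6_7_2: "extendable 6 7 2 {X, Y, Z}"
  using extendable_join_y[OF extendable_6_4_2 extendable_6_3_2] by simp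

lemma extendable_7_2_6: "extendable 7 2 6 {X, Y, Z}"
  using extendable_join_x[OF extendable_4_2_6 extendable_3_2_6] by simp

lemma extendable_7_3_4: "extendable 7 3 4 {X, Y, Z}"
  using extendable_join_x[OF extendable_5_3_4 extendable_2_3_4] by simp

lemma extendable_7_4_3: "extendable 7 4 3 {X, Y, Z}"
  using extendable_join_x[OF extendable_2_4_3 extendable_5_4_3] by simp

lemma extendable_7_6_2: "extendable 7 6 2 {X, Y}"
  using extendable_join_y[OF extendable_7_3_2 extendable_7_3_2] by simp

lemma extendable_3_5_6: "extendable 3 5 6 {X, Y, Z}"
  using extendable_join_z[OF extendable_3_5_4 extendable_3_5_2] by simp

lemma extendable_3_6_5: "extendable 3 6 5 {X, Y, Z}"
  using extendable_join_y[OF extendable_3_4_5 extendable_3_2_5] by simp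

lemma extendable_5_3_6: "extendable 5 3 6 {X, Y, Z}"
  using extendable_join_z[OF extendable_5_3_4 extendable_5_3_2] by simp

lemma extendable_5_6_3: "extendable 5 6 3 {X, Y, Z}"
  using extendable_join_y[OF extendable_5_4_3 extendable_5_2_3] by simp

lemma extendable_6_3_5: "extendable 6 3 5 {X, Y, Z}"
  using extendable_join_x[OF extendable_2_3_5 extendable_4_3_5] by simp

lemma extendable_6_5_3: "extendable 6 5 3 {X, Y, Z}"
  using extendable_join_x[OF extendable_2_5_3 extendable_4_5_3] by simp

lemma extendable_4_4_6: "extendable 4 4 6 {X, Y, Z}"
  using extendable_join_z[OF extendable_4_4_3 extendable_4_4_3] by simp

lemma extendable_4_6_4: "extendable 4 6 4 {X, Y, Z}"
  using extendable_join_y[OF extendable_4_3_4 extendable_4_3_4] by simp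

lemma extendable_6_4_4: "extendable 6 4 4 {X, Y, Z}"
  using extendable_join_x[OF extendable_3_4_4 extendable_3_4_4] by simp

lemma extendable_2_7_7: "extendable 2 7 7 {X, Y, Z}"
  using extendable_join_z[OF extendable_2_7_3 extendable_2_7_4] by simp

lemma extendable_7_2_7: "extendable 7 2 7 {X, Y, Z}"
  using extendable_join_z[OF extendable_7_2_4 extendable_7_2_3] by simp

lemma extendable_7_7_2: "extendable 7 7 2 {X, Y}"
  using extendable_join_y[OF extendable_7_3_2 extendable_7_4_2] by simp

lemma extendable_4_5_5: "extendable 4 5 5 {X, Y, Z}"
  using extendable_join_z[OF extendable_4_5_3 extendable_4_5_2] by simp

lemma extendable_5_4_5: "extendable 5 4 5 {X, Y, Z}"
  using extendable_join_z[OF extendable_5_4_3 extendable_5_4_2] by simp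

lemma extendable_5_5_4: "extendable 5 5 4 {X, Y, Z}"
  using extendable_join_y[OF extendable_5_3_4 extendable_5_2_4] by simp

lemma extendable_3_6_6: "extendable 3 6 6 {X, Y, Z}"
  using extendable_join_z[OF extendable_3_6_3 extendable_3_6_3] by simp

lemma extendable_6_3_6: "extendable 6 3 6 {X, Y, Z}"
  using extendable_join_z[OF extendable_6_3_4 extendable_6_3_2] by simp

lemma extendable_6_6_3: "extendable 6 6 3 {X, Y, Z}"
  using extendable_join_x[OF extendable_3_6_3 extendable_3_6_3] by simp

lemma extendable_4_4_7: "extendable 4 4 7 {X, Y, Z}"
  using extendable_join_z[OF extendable_4_4_3 extendable_4_4_4] by simp

lemma extendable_4_7_4: "extendable 4 7 4 {X, Y, Z}"
  using extendable_join_y[OF extendable_4_4_4 extendable_4_3_4] by simp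

lemma extendable_7_4_4: "extendable 7 4 4 {X, Y, Z}"
  using extendable_join_x[OF extendable_3_4_4 extendable_4_4_4] by simp

lemma extendable_4_5_6: "extendable 4 5 6 {X, Y, Z}"
  using extendable_join_y[OF extendable_4_3_6 extendable_4_2_6] by simp

lemma extendable_4_6_5: "extendable 4 6 5 {X, Y, Z}"
  using extendable_join_z[OF extendable_4_6_3 extendable_4_6_2] by simp

lemma extendable_5_4_6: "extendable 5 4 6 {X, Y, Z}"
  using extendable_join_z[OF extendable_5_4_4 extendable_5_4_2] by simp

lemma extendable_5_6_4: "extendable 5 6 4 {X, Y, Z}"
  using extendable_join_x[OF extendable_2_6_4 extendable_3_6_4] by simp

lemma extendable_6_4_5: "extendable 6 4 5 {X, Y, Z}"
  using extendable_join_x[OF extendable_2_4_5 extendable_4_4_5] by simp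

lemma extendable_6_5_4: "extendable 6 5 4 {X, Y, Z}"
  using extendable_join_x[OF extendable_2_5_4 extendable_4_5_4] by simp

lemma extendable_3_6_7: "extendable 3 6 7 {X, Y, Z}"
  using extendable_join_z[OF extendable_3_6_3 extendable_3_6_4] by simp

lemma extendable_3_7_6: "extendable 3 7 6 {X, Y, Z}"
  using extendable_join_y[OF extendable_3_3_6 extendable_3_4_6] by simp

lemma extendable_6_3_7: "extendable 6 3 7 {X, Y, Z}"
  using extendable_join_z[OF extendable_6_3_5 extendable_6_3_2] by simp

lemma extendable_6_7_3: "extendable 6 7 3 {X, Y, Z}"
  using extendable_join_x[OF extendable_2_7_3 extendable_4_7_3] by simp

lemma extendable_7_3_6: "extendable 7 3 6 {X, Y, Z}"
  using extendable_join_x[OF extendable_3_3_6 extendable_4_3_6] by simp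

lemma extendable_7_6_3: "extendable 7 6 3 {X, Y, Z}"
  using extendable_join_y[OF extendable_7_4_3 extendable_7_2_3] by simp

lemma extendable_4_5_7: "extendable 4 5 7 {X, Y, Z}"
  using extendable_join_z[OF extendable_4_5_5 extendable_4_5_2] by simp

lemma extendable_4_7_5: "extendable 4 7 5 {X, Y, Z}"
  using extendable_join_y[OF extendable_4_4_5 extendable_4_3_5] by simp

lemma extendable_5_4_7: "extendable 5 4 7 {X, Y, Z}"
  using extendable_join_x[OF extendable_3_4_7 extendable_2_4_7] by simp

lemma extendable_5_7_4: "extendable 5 7 4 {X, Y, Z}"
  using extendable_join_y[OF extendable_5_4_4 extendable_5_3_4] by simp

lemma extendable_7_4_5: "extendable 7 4 5 {X, Y, Z}"
  using extendable_join_x[OF extendable_2_4_5 extendable_5_4_5] by simp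

lemma extendable_7_5_4: "extendable 7 5 4 {X, Y, Z}"
  using extendable_join_y[OF extendable_7_3_4 extendable_7_2_4] by simp

lemma extendable_4_6_6: "extendable 4 6 6 {X, Y, Z}"
  using extendable_join_y[OF extendable_4_4_6 extendable_4_2_6] by simp

lemma extendable_6_4_6: "extendable 6 4 6 {X, Y, Z}"
  using extendable_join_x[OF extendable_2_4_6 extendable_4_4_6] by simp

lemma extendable_6_6_4: "extendable 6 6 4 {X, Y, Z}"
  using extendable_join_x[OF extendable_3_6_4 extendable_3_6_4] by simp

lemma extendable_5_5_6: "extendable 5 5 6 {X, Y, Z}"
  using extendable_join_y[OF extendable_5_3_6 extendable_5_2_6] by simp

lemma extendable_5_6_5: "extendable 5 6 5 {X, Y, Z}"
  using extendable_join_x[OF extendable_2_6_5 extendable_3_6_5] by simp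

lemma extendable_6_5_5: "extendable 6 5 5 {X, Y, Z}"
  using extendable_join_z[OF extendable_6_5_3 extendable_6_5_2] by simp

lemma extendable_4_6_7: "extendable 4 6 7 {X, Y, Z}"
  using extendable_join_z[OF extendable_4_6_4 extendable_4_6_3] by simp

lemma extendable_4_7_6: "extendable 4 7 6 {X, Y, Z}"
  using extendable_join_z[OF extendable_4_7_4 extendable_4_7_2] by simp

lemma extendable_6_4_7: "extendable 6 4 7 {X, Y, Z}"
  using extendable_join_x[OF extendable_4_4_7 extendable_2_4_7] by simp

lemma extendable_6_7_4: "extendable 6 7 4 {X, Y, Z}"
  using extendable_join_y[OF extendable_6_5_4 extendable_6_2_4] by simp

lemma extendable_7_4_6: "extendable 7 4 6 {X, Y, Z}"
  using extendable_join_x[OF extendable_4_4_6 extendable_3_4_6] by simp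

lemma extendable_7_6_4: "extendable 7 6 4 {X, Y, Z}"
  using extendable_join_x[OF extendable_2_6_4 extendable_5_6_4] by simp

lemma extendable_5_6_6: "extendable 5 6 6 {X, Y, Z}"
  using extendable_join_z[OF extendable_5_6_4 extendable_5_6_2] by simp

lemma extendable_6_5_6: "extendable 6 5 6 {X, Y, Z}"
  using extendable_join_z[OF extendable_6_5_3 extendable_6_5_3] by simp

lemma extendable_6_6_5: "extendable 6 6 5 {X, Y, Z}"
  using extendable_join_y[OF extendable_6_3_5 extendable_6_3_5] by simp

lemma extendable_4_7_7: "extendable 4 7 7 {X, Y, Z}"
  using extendable_join_y[OF extendable_4_5_7 extendable_4_2_7] by simp

lemma extendable_7_4_7: "extendable 7 4 7 {X, Y, Z}"
  using extendable_join_z[OF extendable_7_4_4 extendable_7_4_3] by simp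

lemma extendable_7_7_4: "extendable 7 7 4 {X, Y, Z}"
  using extendable_join_x[OF extendable_3_7_4 extendable_4_7_4] by simp

lemma extendable_5_6_7: "extendable 5 6 7 {X, Y, Z}"
  using extendable_join_x[OF extendable_2_6_7 extendable_3_6_7] by simp

lemma extendable_5_7_6: "extendable 5 7 6 {X, Y, Z}"
  using extendable_join_y[OF extendable_5_3_6 extendable_5_4_6] by simp

lemma extendable_6_5_7: "extendable 6 5 7 {X, Y, Z}"
  using extendable_join_z[OF extendable_6_5_3 extendable_6_5_4] by simp

lemma extendable_6_7_5: "extendable 6 7 5 {X, Y, Z}"
  using extendable_join_y[OF extendable_6_3_5 extendable_6_4_5] by simp

lemma extendable_7_5_6: "extendable 7 5 6 {X, Y, Z}"
  using extendable_join_x[OF extendable_3_5_6 extendable_4_5_6] by simp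

lemma extendable_7_6_5: "extendable 7 6 5 {X, Y, Z}"
  using extendable_join_x[OF extendable_5_6_5 extendable_2_6_5] by simp

lemma extendable_6_6_6: "extendable 6 6 6 {X, Y, Z}"
  using extendable_join_x[OF extendable_3_6_6 extendable_3_6_6] by simp

lemma extendable_6_6_7: "extendable 6 6 7 {X, Y, Z}"
  using extendable_join_x[OF extendable_2_6_7 extendable_4_6_7] by simp

lemma extendable_6_7_6: "extendable 6 7 6 {X, Y, Z}"
  using extendable_join_y[OF extendable_6_4_6 extendable_6_3_6] by simp

lemma extendable_7_6_6: "extendable 7 6 6 {X, Y, Z}"
  using extendable_join_y[OF extendable_7_4_6 extendable_7_2_6] by simp

lemma extendable_6_7_7: "extendable 6 7 7 {X, Y, Z}"
  using extendable_join_y[OF extendable_6_3_7 extendable_6_4_7] by simp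

lemma extendable_7_6_7: "extendable 7 6 7 {X, Y, Z}"
  using extendable_join_z[OF extendable_7_6_4 extendable_7_6_3] by simp

lemma extendable_7_7_6: "extendable 7 7 6 {X, Y, Z}"
  using extendable_join_x[OF extendable_3_7_6 extendable_4_7_6] by simp

lemmas extendable_small_boxes = extendable_2_3_4 extendable_2_3_5 extendable_2_3_6
   extendable_2_3_7 extendable_2_4_3 extendable_2_4_4 extendable_2_4_5 extendable_2_5_3
   extendable_2_5_4 extendable_2_5_5 extendable_2_6_3 extendable_2_7_3 extendable_3_2_4
   extendable_3_2_5 extendable_3_2_6 extendable_3_2_7 extendable_3_3_4 extendable_3_3_6
   extendable_3_4_2 extendable_3_4_3 extendable_3_4_4 extendable_3_5_2 extendable_3_6_2
   extendable_3_6_3 extendable_3_7_2 extendable_4_2_3 extendable_4_2_4 extendable_4_2_5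
   extendable_4_3_2 extendable_4_3_3 extendable_4_4_2 extendable_4_5_2 extendable_5_2_3
   extendable_5_2_4 extendable_5_2_5 extendable_5_3_2 extendable_5_4_2 extendable_5_5_2
   extendable_6_2_3 extendable_6_3_2 extendable_6_3_3 extendable_7_2_3 extendable_7_3_2
   extendable_2_4_6 extendable_2_6_4 extendable_4_2_6 extendable_4_3_4 extendable_4_4_3
   extendable_4_6_2 extendable_6_2_4 extendable_6_4_2 extendable_2_4_7 extendable_2_7_4
   extendable_4_2_7 extendable_4_7_2 extendable_7_2_4 extendable_7_4_2 extendable_2_5_6
   extendable_2_6_5 extendable_3_4_5 extendable_3_5_4 extendable_4_3_5 extendable_4_5_3
   extendable_5_2_6 extendable_5_3_4 extendable_5_4_3 extendable_5_6_2 extendable_6_2_5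
   extendable_6_5_2 extendable_4_4_4 extendable_2_5_7 extendable_2_7_5 extendable_5_2_7
   extendable_5_7_2 extendable_7_2_5 extendable_7_5_2 extendable_2_6_6 extendable_3_4_6
   extendable_3_6_4 extendable_4_3_6 extendable_4_6_3 extendable_6_2_6 extendable_6_3_4
   extendable_6_4_3 extendable_6_6_2 extendable_4_4_5 extendable_4_5_4 extendable_5_4_4
   extendable_2_6_7 extendable_2_7_6 extendable_3_4_7 extendable_3_7_4 extendable_4_3_7
   extendable_4_7_3 extendable_6_2_7 extendable_6_7_2 extendable_7_2_6 extendable_7_3_4
   extendable_7_4_3 extendable_7_6_2 extendable_3_5_6 extendable_3_6_5 extendable_5_3_6
   extendable_5_6_3 extendable_6_3_5 extendable_6_5_3 extendable_4_4_6 extendable_4_6_4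
   extendable_6_4_4 extendable_2_7_7 extendable_7_2_7 extendable_7_7_2 extendable_4_5_5
   extendable_5_4_5 extendable_5_5_4 extendable_3_6_6 extendable_6_3_6 extendable_6_6_3
   extendable_4_4_7 extendable_4_7_4 extendable_7_4_4 extendable_4_5_6 extendable_4_6_5
   extendable_5_4_6 extendable_5_6_4 extendable_6_4_5 extendable_6_5_4 extendable_3_6_7
   extendable_3_7_6 extendable_6_3_7 extendable_6_7_3 extendable_7_3_6 extendable_7_6_3
   extendable_4_5_7 extendable_4_7_5 extendable_5_4_7 extendable_5_7_4 extendable_7_4_5
   extendable_7_5_4 extendable_4_6_6 extendable_6_4_6 extendable_6_6_4 extendable_5_5_6
   extendable_5_6_5 extendable_6_5_5 extendable_4_6_7 extendable_4_7_6 extendable_6_4_7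
   extendable_6_7_4 extendable_7_4_6 extendable_7_6_4 extendable_5_6_6 extendable_6_5_6
   extendable_6_6_5 extendable_4_7_7 extendable_7_4_7 extendable_7_7_4 extendable_5_6_7
   extendable_5_7_6 extendable_6_5_7 extendable_6_7_5 extendable_7_5_6 extendable_7_6_5
   extendable_6_6_6 extendable_6_6_7 extendable_6_7_6 extendable_7_6_6 extendable_6_7_7
   extendable_7_6_7 extendable_7_7_6

section \<open>All admissible boxes\<close>

text \<open>Conditions (a)--(c) of the theorem, for boxes whose sides are not sorted.\<close>

definition admissible_box :: "nat \<Rightarrow> nat \<Rightarrow> nat \<Rightarrow> bool" where
  "admissible_box a b c \<longleftrightarrow> 2 \<le> a \<and> 2 \<le> b \<and> 2 \<le> c \<and>
     ((3 \<le> a \<and> 3 \<le> b) \<or> (3 \<le> a \<and> 3 \<le> c) \<or> (3 \<le> b \<and> 3 \<le> c)) \<and>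
     (4 \<le> a \<or> 4 \<le> b \<or> 4 \<le> c) \<and> (even a \<or> even b \<or> even c)"

text \<open>Splitting off a slab of width 4 along an axis needs connectors along that axis in both
  parts; these are exactly the axes along which the induction splits.\<close>

definition long_axes :: "nat \<Rightarrow> nat \<Rightarrow> nat \<Rightarrow> axis set" where
  "long_axes a b c =
     (if 4 \<le> a then {X} else {}) \<union> (if 4 \<le> b then {Y} else {}) \<union> (if 4 \<le> c then {Z} else {})"

lemma extendable_small_box:
  assumes "a \<le> 7" "b \<le> 7" "c \<le> 7" "admissible_box a b c"
  shows "extendable a b c (long_axes a b c)"
proof -
  let ?D = "{2, 3, 4, 5, 6, 7} :: nat set"
  have "\<forall>a\<in>?D. \<forall>b\<in>?D. \<forall>c\<in>?D. admissible_box a b c \<longrightarrow> extendable a b c (long_axes a b c)"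
    by (simp add: admissible_box_def long_axes_def extendable_small_boxes[THEN extendable_mono])
  moreover have "a \<in> ?D" "b \<in> ?D" "c \<in> ?D"
    using assms unfolding admissible_box_def by auto
  ultimately show ?thesis using assms(4) by blast
qed

lemma extendable_if_admissible:
  "admissible_box a b c \<Longrightarrow> extendable a b c (long_axes a b c)"
proof (induction "a + b + c" arbitrary: a b c rule: less_induct)
  case less
  consider "8 \<le> c" | "8 \<le> b" | "8 \<le> a" | "a \<le> 7" "b \<le> 7" "c \<le> 7" by linarith
  then show ?case
  proof cases
    case 1
    have "extendable a b 4 (long_axes a b 4)" "extendable a b (c - 4) (long_axes a b (c - 4))"
      using less 1 by (auto simp: admissible_box_def intro!: less.hyps)
    then have "extendable a b (4 + (c - 4)) (long_axes a b 4)"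
      by (rule extendable_join_z) (use 1 in \<open>simp_all add: long_axes_def\<close>)
    then show ?thesis using 1 by (simp add: long_axes_def)
  next
    case 2
    have "extendable a 4 c (long_axes a 4 c)" "extendable a (b - 4) c (long_axes a (b - 4) c)"
      using less 2 by (auto simp: admissible_box_def intro!: less.hyps)
    then have "extendable a (4 + (b - 4)) c (long_axes a 4 c)"
      by (rule extendable_join_y) (use 2 in \<open>simp_all add: long_axes_def\<close>)
    then show ?thesis using 2 by (simp add: long_axes_def)
  next
    case 3
    have "extendable 4 b c (long_axes 4 b c)" "extendable (a - 4) b c (long_axes (a - 4) b c)"
      using less 3 by (auto simp: admissible_box_def intro!: less.hyps)
    then have "extendable (4 + (a - 4)) b c (long_axes 4 b c)"
      by (rule extendable_join_x) (use 3 in \<open>simp_all add: long_axes_def\<close>)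
    then show ?thesis using 3 by (simp add: long_axes_def)
  next
    case 4
    then show ?thesis using less.prems by (rule extendable_small_box)
  qed
qed

section \<open>Necessary conditions\<close>

lemma closed_tour_step:
  assumes "closed_tour B N a" "i < N"
  shows "a i \<in> B" "a (Suc i mod N) \<in> B" "is_knight_move (psub (a (Suc i mod N)) (a i))"
proof -
  have bij: "bij_betw a {..<N} B" and "0 < N" using assms unfolding closed_tour_def by auto
  then have "Suc i mod N \<in> {..<N}" "i \<in> {..<N}" using assms(2) by simp_all
  then show "a i \<in> B" "a (Suc i mod N) \<in> B" using bij_betw_apply[OF bij] by blast+
  show "is_knight_move (psub (a (Suc i mod N)) (a i))"
    using assms unfolding closed_tour_def knight_moves_iff by blast
qed

lemma closed_tour_visits:
  assumes "closed_tour B N a" "b \<in> B"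
  obtains i where "i < N" "a i = b"
proof -
  have "b \<in> a ` {..<N}" using assms unfolding closed_tour_def bij_betw_def by blast
  then show ?thesis using that by blast
qed

lemma closed_tour_has_neighbour:
  assumes "closed_tour B N a" "b \<in> B"
  shows "\<exists>c\<in>B. is_knight_move (psub c b)"
  using closed_tour_visits[OF assms] closed_tour_step[OF assms(1)] by metis

lemma even_diff_if_even_steps:
  fixes f :: "nat \<Rightarrow> int"
  assumes "\<And>i. Suc i < N \<Longrightarrow> even (f (Suc i) - f i)" "i < N"
  shows "even (f i - f 0)"
  using assms(2)
proof (induction i)
  case (Suc i)
  then show ?case using assms(1)[of i] by presburger
qed simp

lemma even_length_if_odd_steps:
  fixes f :: "nat \<Rightarrow> int"
  assumes "0 < N" and odd: "\<And>i. i < N \<Longrightarrow> odd (f (Suc i mod N) - f i)"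
  shows "even N"
proof -
  have "even (f i - f 0 - int i)" if "i < N" for i
    using that
  proof (induction i)
    case (Suc i)
    then have "odd (f (Suc i) - f i)" using odd[of i] by simp
    with Suc show ?case by presburger
  qed simp
  then have "even (f (N - 1) - f 0 - int (N - 1))" using assms(1) by simp
  moreover have "odd (f 0 - f (N - 1))" using odd[of "N - 1"] assms(1) by simp
  ultimately show ?thesis using assms(1) by presburger
qed

lemma abs_eq_1_cases: "\<bar>x :: int\<bar> = 1 \<Longrightarrow> x = 1 \<or> x = -1"
  by arith

lemma abs_eq_2_cases: "\<bar>x :: int\<bar> = 2 \<Longrightarrow> x = 2 \<or> x = -2"
  by arith

definition coord_sum :: "pt \<Rightarrow> int" where
  "coord_sum p = (case p of (x, y, z) \<Rightarrow> x + y + z)"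

lemma odd_coord_sum_knight_move:
  assumes "is_knight_move (psub q p)"
  shows "odd (coord_sum q - coord_sum p)"
proof -
  obtain x1 y1 z1 x2 y2 z2 where qp: "q = (x1, y1, z1)" "p = (x2, y2, z2)" by (cases q, cases p)
  have odd_sum: "odd (x + y + z)" if "is_knight_move (x, y, z)" for x y z
    using that unfolding is_knight_move_def by (auto dest!: abs_eq_1_cases abs_eq_2_cases)
  have "is_knight_move (x1 - x2, y1 - y2, z1 - z2)" using assms unfolding qp by simp
  moreover have "coord_sum q - coord_sum p = (x1 - x2) + (y1 - y2) + (z1 - z2)"
    unfolding qp coord_sum_def by simp
  ultimately show ?thesis using odd_sum by presburger
qed

lemma closed_tour_even_length:
  assumes "closed_tour B N a"
  shows "even N"
proof (rule even_length_if_odd_steps[of N "\<lambda>i. coord_sum (a i)"])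
  show "0 < N" using assms unfolding closed_tour_def by simp
  show "odd (coord_sum (a (Suc i mod N)) - coord_sum (a i))" if "i < N" for i
    using odd_coord_sum_knight_move closed_tour_step(3)[OF assms that] by blast
qed

lemma no_closed_tour_narrow_board:
  assumes "m \<le> 2" "n \<le> 2" "2 \<le> p"
  shows "\<not> closed_tour (board m n p) N a"
proof
  assume tour: "closed_tour (board m n p) N a"
  let ?z = "\<lambda>i. snd (snd (a i))"
  have step: "even (?z (Suc i) - ?z i)" if "Suc i < N" for i
  proof -
    have "i < N" "Suc i mod N = Suc i" using that by simp_all
    note S = closed_tour_step[OF tour this(1), unfolded this(2)]
    obtain x1 y1 z1 x2 y2 z2 where a: "a (Suc i) = (x1, y1, z1)" "a i = (x2, y2, z2)"
      by (cases "a (Suc i)", cases "a i")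
    have "\<bar>x1 - x2\<bar> \<le> 1" "\<bar>y1 - y2\<bar> \<le> 1"
      using S(1,2) assms(1,2) unfolding a board_def by auto
    then have "\<bar>z1 - z2\<bar> = 2" using S(3) unfolding a is_knight_move_def by auto
    then have "z1 - z2 = 2 \<or> z1 - z2 = -2" by (rule abs_eq_2_cases)
    then show ?thesis unfolding a snd_conv by presburger
  qed
  have "3 \<le> m * n * p" using tour card_board unfolding closed_tour_def by metis
  then have "m \<noteq> 0" "n \<noteq> 0" by (metis mult_0 mult_0_right not_numeral_le_zero)+
  then have "(1, 1, 1) \<in> board m n p" "(1, 1, 2) \<in> board m n p"
    using assms(3) unfolding board_def by simp_all
  then obtain i j where "i < N" "a i = (1, 1, 1)" "j < N" "a j = (1, 1, 2)"
    by (meson closed_tour_visits[OF tour])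
  moreover have "even (?z k - ?z 0)" if "k < N" for k
    using even_diff_if_even_steps[of N ?z k] step that by blast
  ultimately have "even (1 - ?z 0)" "even (2 - ?z 0)" by (metis snd_conv)+
  then show False by presburger
qed

lemma no_closed_tour_2_3_3: "\<not> closed_tour (board 2 3 3) N a"
proof
  assume "closed_tour (board 2 3 3) N a"
  moreover have "(1, 2, 2) \<in> board 2 3 3" unfolding board_def by simp
  ultimately obtain c where c: "c \<in> board 2 3 3" "is_knight_move (psub c (1, 2, 2))"
    using closed_tour_has_neighbour by blast
  obtain x y z where xyz: "c = (x, y, z)" by (cases c)
  have "\<bar>x - 1\<bar> \<le> 1" "\<bar>y - 2\<bar> \<le> 1" "\<bar>z - 2\<bar> \<le> 1"
    using c(1) unfolding xyz board_def by auto
  then show False using c(2) unfolding xyz is_knight_move_def by auto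
qed

theorem theorem4p4:
  fixes m n p :: nat
  assumes "2 \<le> m" and "m \<le> n" and "n \<le> p"
  shows "has_bisited_tour m n p \<longleftrightarrow> ((even m \<or> even n \<or> even p) \<and> 3 \<le> n \<and> 4 \<le> p)"
proof
  assume "has_bisited_tour m n p"
  then obtain N a where tour: "closed_tour (board m n p) N a"
    unfolding has_bisited_tour_def by blast
  have "even (m * n * p)"
    using closed_tour_even_length[OF tour] tour card_board unfolding closed_tour_def by metis
  then have parity: "even m \<or> even n \<or> even p" by simp
  moreover have "3 \<le> n"
    using no_closed_tour_narrow_board[of m n p] tour assms by fastforce
  moreover have "4 \<le> p"
  proof (rule ccontr)
    assume "\<not> 4 \<le> p"
    then have "n = 3" "p = 3" "m = 2 \<or> m = 3" using \<open>3 \<le> n\<close> assms by auto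
    then show False using parity tour no_closed_tour_2_3_3 by auto
  qed
  ultimately show "(even m \<or> even n \<or> even p) \<and> 3 \<le> n \<and> 4 \<le> p" by blast
next
  assume "(even m \<or> even n \<or> even p) \<and> 3 \<le> n \<and> 4 \<le> p"
  then have "admissible_box m n p" using assms unfolding admissible_box_def by auto
  then show "has_bisited_tour m n p"
    using extendable_if_admissible has_bisited_tour_if_extendable by blast
qed

end
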